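(* Let $n\ge1$ and $F_n=F(1)\otimes\cdots\otimes F(n)\subseteq\mathbb{S}_n$. Then: (1) The centre of $\mathbb{S}_n$ is $K$. (2) For every nonzero $a\in\mathbb{S}_n$ one has $F_na\neq0$ and $aF_n\ne0$. (3) $F_n$ is the smallest nonzero ideal of $\mathbb{S}_n$, i.e. it is contained in every nonzero ideal. Moreover, $F_n^2=F_n$, and $F_n$ is an essential left and right submodule of $\mathbb{S}_n$. $F_n$ is the socle of $\mathbb{S}_n$ as a left module and as a right module, $F_n$ is the socle of the $\mathbb{S}_n$-bimodule $\mathbb{S}_n$, and $F_n$ is a simple $\mathbb{S}_n$-bimodule. (4) $\mathbb{S}_n$ is a prime algebra. (5) Every nonzero ideal of $\mathbb{S}_n$ is an essential left and right submodule of $\mathbb{S}_n$.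
   Context: $K$ is a field. $\mathbb{S}_n$ is the $K$-algebra generated by $x_1,\dots,x_n,y_1,\dots,y_n$ subject to the defining relations $y_ix_i=1$ for all $i$, and $[x_i,y_j]=[x_i,x_j]=[y_i,y_j]=0$ for all $i\ne j$. For each $i$, $\mathbb{S}_1(i)$ is the subalgebra generated by $x_i,y_i$, and $\mathbb{S}_n=\mathbb{S}_1(1)\otimes\cdots\otimes\mathbb{S}_1(n)$. $F(i)=\bigoplus_{k,l\in\mathbb N}K(x_i^ky_i^l-x_i^{k+1}y_i^{l+1})$, an ideal of $\mathbb{S}_1(i)$. *)

theory Defs
  imports Main
begin

text \<open>
  S_n = S_1(1) (x) ... (x) S_1(n), and S_1 = K<x,y | yx = 1> has the K-basis
  x^k y^l (k,l in N) with (x^a y^b)(x^c y^d) = x^(a + (c-b)^+) y^(d + (b-c)^+),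
  i.e. S_1 is the monoid algebra of the bicyclic monoid.  Hence S_n is the
  monoid algebra of the n-th power of the bicyclic monoid.  A word
  x^k y^l := prod_i x_i^(k i) y_i^(l i) is indexed by a pair of functions
  (k, l) :: (nat => nat) x (nat => nat), vanishing outside {0..<n}
  (variables are indexed 0..n-1 instead of 1..n).
\<close>

type_synonym word = "(nat \<Rightarrow> nat) \<times> (nat \<Rightarrow> nat)"

definition wmul :: "word \<Rightarrow> word \<Rightarrow> word" where
  "wmul u v = (\<lambda>i. fst u i + (fst v i - snd u i), \<lambda>i. snd v i + (snd u i - fst v i))"

definition words :: "nat \<Rightarrow> word set" where
  "words n = {(k, l). \<forall>i\<ge>n. k i = 0 \<and> l i = 0}"

definition supp :: "(word \<Rightarrow> 'k::zero) \<Rightarrow> word set" where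
  "supp f = {w. f w \<noteq> 0}"

definition Sn :: "nat \<Rightarrow> (word \<Rightarrow> 'k::field) set" where
  "Sn n = {f. finite (supp f) \<and> supp f \<subseteq> words n}"

definition szero :: "word \<Rightarrow> 'k::field" where
  "szero = (\<lambda>w. 0)"

definition sone :: "word \<Rightarrow> 'k::field" where
  "sone = (\<lambda>w. if w = (\<lambda>i. 0, \<lambda>i. 0) then 1 else 0)"

definition sadd :: "(word \<Rightarrow> 'k::field) \<Rightarrow> (word \<Rightarrow> 'k) \<Rightarrow> (word \<Rightarrow> 'k)" where
  "sadd f g = (\<lambda>w. f w + g w)"

definition ssub :: "(word \<Rightarrow> 'k::field) \<Rightarrow> (word \<Rightarrow> 'k) \<Rightarrow> (word \<Rightarrow> 'k)" where
  "ssub f g = (\<lambda>w. f w - g w)"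

definition sscale :: "'k::field \<Rightarrow> (word \<Rightarrow> 'k) \<Rightarrow> (word \<Rightarrow> 'k)" where
  "sscale c f = (\<lambda>w. c * f w)"

definition smult :: "(word \<Rightarrow> 'k::field) \<Rightarrow> (word \<Rightarrow> 'k) \<Rightarrow> (word \<Rightarrow> 'k)" where
  "smult f g = (\<lambda>w. \<Sum>p \<in> supp f \<times> supp g. if wmul (fst p) (snd p) = w then f (fst p) * g (snd p) else 0)"

definition spow :: "(word \<Rightarrow> 'k::field) \<Rightarrow> nat \<Rightarrow> (word \<Rightarrow> 'k)" where
  "spow a k = ((smult a) ^^ k) sone"

definition X :: "nat \<Rightarrow> (word \<Rightarrow> 'k::field)" where
  "X i = (\<lambda>w. if w = ((\<lambda>j. if j = i then 1 else 0), (\<lambda>j. 0)) then 1 else 0)"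

definition Y :: "nat \<Rightarrow> (word \<Rightarrow> 'k::field)" where
  "Y i = (\<lambda>w. if w = ((\<lambda>j. 0), (\<lambda>j. if j = i then 1 else 0)) then 1 else 0)"

inductive_set sspan :: "(word \<Rightarrow> 'k::field) set \<Rightarrow> (word \<Rightarrow> 'k) set" for A where
  zero: "szero \<in> sspan A"
| base: "a \<in> A \<Longrightarrow> a \<in> sspan A"
| add: "a \<in> sspan A \<Longrightarrow> b \<in> sspan A \<Longrightarrow> sadd a b \<in> sspan A"
| scale: "a \<in> sspan A \<Longrightarrow> sscale c a \<in> sspan A"

definition Fi :: "nat \<Rightarrow> (word \<Rightarrow> 'k::field) set" where
  "Fi i = sspan {ssub (smult (spow (X i) k) (spow (Y i) l))
                       (smult (spow (X i) (Suc k)) (spow (Y i) (Suc l))) | k l. True}"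

text \<open>F_n = F(1) (x) ... (x) F(n) inside S_n: span of products f_1 ... f_n, f_i in F(i).\<close>
definition Fn :: "nat \<Rightarrow> (word \<Rightarrow> 'k::field) set" where
  "Fn n = sspan {foldr smult (map f [0..<n]) sone | f. \<forall>i<n. f i \<in> Fi i}"

definition centre :: "nat \<Rightarrow> (word \<Rightarrow> 'k::field) set" where
  "centre n = {a \<in> Sn n. \<forall>b \<in> Sn n. smult a b = smult b a}"

text \<open>Left / right submodules of S_n (= left / right ideals), two-sided ideals (= sub-bimodules).\<close>
definition left_ideal :: "nat \<Rightarrow> (word \<Rightarrow> 'k::field) set \<Rightarrow> bool" where
  "left_ideal n I \<longleftrightarrow> I \<subseteq> Sn n \<and> szero \<in> I \<and> (\<forall>a\<in>I. \<forall>b\<in>I. sadd a b \<in> I)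
      \<and> (\<forall>s\<in>Sn n. \<forall>a\<in>I. smult s a \<in> I)"

definition right_ideal :: "nat \<Rightarrow> (word \<Rightarrow> 'k::field) set \<Rightarrow> bool" where
  "right_ideal n I \<longleftrightarrow> I \<subseteq> Sn n \<and> szero \<in> I \<and> (\<forall>a\<in>I. \<forall>b\<in>I. sadd a b \<in> I)
      \<and> (\<forall>s\<in>Sn n. \<forall>a\<in>I. smult a s \<in> I)"

definition ideal :: "nat \<Rightarrow> (word \<Rightarrow> 'k::field) set \<Rightarrow> bool" where
  "ideal n I \<longleftrightarrow> left_ideal n I \<and> right_ideal n I"

definition setprod :: "(word \<Rightarrow> 'k::field) set \<Rightarrow> (word \<Rightarrow> 'k) set \<Rightarrow> (word \<Rightarrow> 'k) set" where
  "setprod A B = sspan {smult a b | a b. a \<in> A \<and> b \<in> B}"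

definition essential_left :: "nat \<Rightarrow> (word \<Rightarrow> 'k::field) set \<Rightarrow> bool" where
  "essential_left n M \<longleftrightarrow> left_ideal n M \<and>
     (\<forall>N. left_ideal n N \<and> N \<noteq> {szero} \<longrightarrow> M \<inter> N \<noteq> {szero})"

definition essential_right :: "nat \<Rightarrow> (word \<Rightarrow> 'k::field) set \<Rightarrow> bool" where
  "essential_right n M \<longleftrightarrow> right_ideal n M \<and>
     (\<forall>N. right_ideal n N \<and> N \<noteq> {szero} \<longrightarrow> M \<inter> N \<noteq> {szero})"

definition simple_left :: "nat \<Rightarrow> (word \<Rightarrow> 'k::field) set \<Rightarrow> bool" where
  "simple_left n M \<longleftrightarrow> left_ideal n M \<and> M \<noteq> {szero} \<and>
     (\<forall>N. left_ideal n N \<and> N \<subseteq> M \<longrightarrow> N = {szero} \<or> N = M)"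

definition simple_right :: "nat \<Rightarrow> (word \<Rightarrow> 'k::field) set \<Rightarrow> bool" where
  "simple_right n M \<longleftrightarrow> right_ideal n M \<and> M \<noteq> {szero} \<and>
     (\<forall>N. right_ideal n N \<and> N \<subseteq> M \<longrightarrow> N = {szero} \<or> N = M)"

definition simple_bimod :: "nat \<Rightarrow> (word \<Rightarrow> 'k::field) set \<Rightarrow> bool" where
  "simple_bimod n M \<longleftrightarrow> ideal n M \<and> M \<noteq> {szero} \<and>
     (\<forall>N. ideal n N \<and> N \<subseteq> M \<longrightarrow> N = {szero} \<or> N = M)"

definition soc_left :: "nat \<Rightarrow> (word \<Rightarrow> 'k::field) set" where
  "soc_left n = sspan (\<Union>{M. simple_left n M})"

definition soc_right :: "nat \<Rightarrow> (word \<Rightarrow> 'k::field) set" where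
  "soc_right n = sspan (\<Union>{M. simple_right n M})"

definition soc_bimod :: "nat \<Rightarrow> (word \<Rightarrow> 'k::field) set" where
  "soc_bimod n = sspan (\<Union>{M. simple_bimod n M})"

definition prime_alg :: "nat \<Rightarrow> ('k::field) itself \<Rightarrow> bool" where
  "prime_alg n _ \<longleftrightarrow> (\<forall>I J :: (word \<Rightarrow> 'k) set. ideal n I \<and> ideal n J \<and> setprod I J = {szero}
      \<longrightarrow> I = {szero} \<or> J = {szero})"

end

theory Submission
  imports Defs
begin

(*
  Put
  E = (1 - x_1 y_1) ... (1 - x_n y_n).  Since y_i x_i = 1 we have y_i E = 0 = E x_i, and hence the
  elements E_kl = x^k E y^l (k, l exponent vectors) are matrix units:
  E_kl E_k'l' = (if l = k' then E_kl' else 0).  The product F(1) ... F(n) is their span.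

  If a is nonzero and (p, q) is a word of the support of a whose x-degree |p| is minimal, then
  E_0p a E_q0 = a(p, q) E.  So every nonzero element generates E, hence every E_kl, as a
  two-sided ideal; all statements about ideals, essentiality, socles and primeness follow from
  this.  A central element with vanishing constant term is killed by E and hence by every
  corner E_0p _ E_q0, so it is zero.  Closure of F_n under right multiplication and the right
  socle are obtained from their left-handed versions via the anti-automorphism x_i <-> y_i.
*)

lemma sum_swap3:
  "(\<Sum>t\<in>T. \<Sum>a\<in>A. \<Sum>b\<in>B. G t a b) = (\<Sum>a\<in>A. \<Sum>b\<in>B. \<Sum>t\<in>T. G t a b)"
proof -
  have "(\<Sum>t\<in>T. \<Sum>a\<in>A. \<Sum>b\<in>B. G t a b) = (\<Sum>a\<in>A. \<Sum>t\<in>T. \<Sum>b\<in>B. G t a b)"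
    by (rule sum.swap)
  also have "\<dots> = (\<Sum>a\<in>A. \<Sum>b\<in>B. \<Sum>t\<in>T. G t a b)"
    by (rule sum.cong[OF refl], rule sum.swap)
  finally show ?thesis .
qed

lemma if_zero_mult: "(if P then x else 0) * (y::'a::mult_zero) = (if P then x * y else 0)"
  by simp

lemma mult_if_zero: "(y::'a::mult_zero) * (if P then x else 0) = (if P then y * x else 0)"
  by simp

lemma if_zero_add: "(if P then x + y else 0) = (if P then x else 0) + (if P then y else (0::'a::monoid_add))"
  by simp

lemma if_zero_sum: "(if P then sum f A else 0) = (\<Sum>x\<in>A. if P then f x else 0)"
  by simp

lemma sum_if_eq_collapse:
  fixes F :: "'a \<Rightarrow> 'b \<Rightarrow> 'd::comm_monoid_add"
  assumes "finite T" "\<And>a b. a \<in> A \<Longrightarrow> b \<in> B \<Longrightarrow> m a b \<in> T"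
  shows "(\<Sum>t\<in>T. \<Sum>a\<in>A. \<Sum>b\<in>B. if P t then (if m a b = t then F a b else 0) else 0)
    = (\<Sum>a\<in>A. \<Sum>b\<in>B. if P (m a b) then F a b else 0)"
proof -
  have "(\<Sum>t\<in>T. \<Sum>a\<in>A. \<Sum>b\<in>B. if P t then (if m a b = t then F a b else 0) else 0)
    = (\<Sum>a\<in>A. \<Sum>b\<in>B. \<Sum>t\<in>T. if m a b = t then (if P t then F a b else 0) else 0)"
    by (subst sum_swap3) (simp add: if_if_eq_conj conj_commute)
  also have "\<dots> = (\<Sum>a\<in>A. \<Sum>b\<in>B. if P (m a b) then F a b else 0)"
    using assms by (auto intro!: sum.cong)
  finally show ?thesis .
qed

section \<open>The monoid algebra of words\<close>

definition sbasis :: "word \<Rightarrow> word \<Rightarrow> 'k::field" where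
  "sbasis u = (\<lambda>v. if v = u then 1 else 0)"

definition finsupp :: "(word \<Rightarrow> 'k::field) set" where
  "finsupp = {f. finite (supp f)}"

abbreviation zexp :: "nat \<Rightarrow> nat" where
  "zexp \<equiv> \<lambda>i. 0"

lemma wmul_assoc: "wmul (wmul u v) t = wmul u (wmul v t)"
  by (auto simp: wmul_def fun_eq_iff)

lemma wmul_zexp_left [simp]: "wmul (zexp, zexp) v = v"
  and wmul_zexp_right [simp]: "wmul v (zexp, zexp) = v"
  by (simp_all add: wmul_def)

lemma wmul_swap: "wmul (prod.swap v) (prod.swap u) = prod.swap (wmul u v)"
  by (simp add: wmul_def)

lemma wmul_words: "u \<in> words n \<Longrightarrow> v \<in> words n \<Longrightarrow> wmul u v \<in> words n"
  by (auto simp: words_def wmul_def)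

lemma smult_expand:
  assumes "finite A" "finite B" "supp f \<subseteq> A" "supp g \<subseteq> B"
  shows "smult f g w = (\<Sum>u\<in>A. \<Sum>v\<in>B. if wmul u v = w then f u * g v else 0)"
proof -
  have "smult f g w = (\<Sum>p\<in>A \<times> B. if wmul (fst p) (snd p) = w then f (fst p) * g (snd p) else 0)"
    unfolding smult_def using assms by (intro sum.mono_neutral_left) (auto simp: supp_def)
  also have "\<dots> = (\<Sum>u\<in>A. \<Sum>v\<in>B. if wmul u v = w then f u * g v else 0)"
    by (simp add: sum.cartesian_product split_beta)
  finally show ?thesis .
qed

lemma supp_smult: "supp (smult f g) \<subseteq> (\<lambda>p. wmul (fst p) (snd p)) ` (supp f \<times> supp g)"
proof
  fix w assume "w \<in> supp (smult f g)"
  then have "(\<Sum>p\<in>supp f \<times> supp g. if wmul (fst p) (snd p) = w then f (fst p) * g (snd p) else 0) \<noteq> 0"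
    by (simp add: supp_def smult_def)
  then obtain p where "p \<in> supp f \<times> supp g"
      "(if wmul (fst p) (snd p) = w then f (fst p) * g (snd p) else 0) \<noteq> 0"
    by (rule sum.not_neutral_contains_not_neutral)
  then show "w \<in> (\<lambda>p. wmul (fst p) (snd p)) ` (supp f \<times> supp g)"
    by (auto split: if_splits)
qed

lemma supp_szero [simp]: "supp szero = {}"
  by (simp add: supp_def szero_def)

lemma supp_sbasis [simp]: "supp (sbasis u) = {u}"
  by (auto simp: supp_def sbasis_def)

lemma supp_sadd: "supp (sadd f g) \<subseteq> supp f \<union> supp g"
  by (auto simp: supp_def sadd_def)

lemma supp_ssub: "supp (ssub f g) \<subseteq> supp f \<union> supp g"
  by (auto simp: supp_def ssub_def)

lemma supp_sscale: "supp (sscale c f) \<subseteq> supp f"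
  by (auto simp: supp_def sscale_def)

lemma supp_fun_upd_zero: "supp (f(w := 0)) = supp f - {w}"
  by (auto simp: supp_def)

lemma ssub_self [simp]: "ssub f f = szero"
  by (simp add: ssub_def szero_def)

lemma sscale_eq_szero_iff: "sscale c f = szero \<longleftrightarrow> c = 0 \<or> f = szero"
  by (auto simp: sscale_def szero_def fun_eq_iff)

lemma sscale_sscale [simp]: "sscale c (sscale d f) = sscale (c * d) f"
  by (simp add: sscale_def fun_eq_iff)

lemma sscale_one [simp]: "sscale 1 f = f"
  by (simp add: sscale_def)

lemma sone_eq_sbasis: "sone = sbasis (zexp, zexp)"
  by (simp add: sone_def sbasis_def)

lemma finsupp_smult [simp]: "f \<in> finsupp \<Longrightarrow> g \<in> finsupp \<Longrightarrow> smult f g \<in> finsupp"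
  unfolding finsupp_def using supp_smult[of f g] by (simp add: finite_subset)

lemma finsupp_szero [simp]: "szero \<in> finsupp"
  by (simp add: finsupp_def)

lemma finsupp_sbasis [simp]: "sbasis u \<in> finsupp"
  by (simp add: finsupp_def)

lemma finsupp_sone [simp]: "sone \<in> finsupp"
  by (simp add: sone_eq_sbasis)

lemma finsupp_sadd [simp]: "f \<in> finsupp \<Longrightarrow> g \<in> finsupp \<Longrightarrow> sadd f g \<in> finsupp"
  unfolding finsupp_def using supp_sadd by (metis finite_Un finite_subset mem_Collect_eq)

lemma finsupp_ssub [simp]: "f \<in> finsupp \<Longrightarrow> g \<in> finsupp \<Longrightarrow> ssub f g \<in> finsupp"
  unfolding finsupp_def using supp_ssub by (metis finite_Un finite_subset mem_Collect_eq)

lemma finsupp_sscale [simp]: "f \<in> finsupp \<Longrightarrow> sscale c f \<in> finsupp"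
  unfolding finsupp_def using supp_sscale by (metis finite_subset mem_Collect_eq)

lemma Sn_finsupp: "f \<in> Sn n \<Longrightarrow> f \<in> finsupp"
  by (simp add: Sn_def finsupp_def)

lemma smult_assoc:
  assumes "f \<in> finsupp" "g \<in> finsupp" "h \<in> finsupp"
  shows "smult (smult f g) h = smult f (smult g h)"
proof
  fix w
  let ?A = "supp f" and ?B = "supp g" and ?C = "supp h"
  let ?T = "(\<lambda>p. wmul (fst p) (snd p)) ` (?A \<times> ?B)"
    and ?S = "(\<lambda>p. wmul (fst p) (snd p)) ` (?B \<times> ?C)"
  have fin: "finite ?A" "finite ?B" "finite ?C" "finite ?T" "finite ?S"
    using assms by (auto simp: finsupp_def)
  have T: "wmul a b \<in> ?T" if "a \<in> ?A" "b \<in> ?B" for a b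
    by (rule image_eqI[of _ _ "(a, b)"]) (use that in auto)
  have S: "wmul b c \<in> ?S" if "b \<in> ?B" "c \<in> ?C" for b c
    by (rule image_eqI[of _ _ "(b, c)"]) (use that in auto)
  have fg: "smult f g t = (\<Sum>a\<in>?A. \<Sum>b\<in>?B. if wmul a b = t then f a * g b else 0)" for t
    using fin by (intro smult_expand) auto
  have gh: "smult g h s = (\<Sum>b\<in>?B. \<Sum>c\<in>?C. if wmul b c = s then g b * h c else 0)" for s
    using fin by (intro smult_expand) auto
  have "smult (smult f g) h w
      = (\<Sum>c\<in>?C. \<Sum>t\<in>?T. if wmul t c = w then smult f g t * h c else 0)"
    using fin supp_smult by (subst sum.swap) (intro smult_expand, auto)
  also have "\<dots> = (\<Sum>c\<in>?C. \<Sum>t\<in>?T. \<Sum>a\<in>?A. \<Sum>b\<in>?B.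
      if wmul t c = w then (if wmul a b = t then f a * g b * h c else 0) else 0)"
    by (simp add: fg sum_distrib_right if_zero_sum if_zero_mult cong: if_cong)
  also have "\<dots> = (\<Sum>c\<in>?C. \<Sum>a\<in>?A. \<Sum>b\<in>?B. if wmul (wmul a b) c = w then f a * g b * h c else 0)"
    by (rule sum.cong[OF refl], rule sum_if_eq_collapse) (use fin T in auto)
  also have "\<dots> = (\<Sum>a\<in>?A. \<Sum>s\<in>?S. \<Sum>b\<in>?B. \<Sum>c\<in>?C.
      if wmul a s = w then (if wmul b c = s then f a * (g b * h c) else 0) else 0)"
    by (subst sum_swap3, rule sum.cong[OF refl], subst sum_if_eq_collapse)
      (use fin S in \<open>auto simp: wmul_assoc mult.assoc cong: if_cong\<close>)
  also have "\<dots> = (\<Sum>a\<in>?A. \<Sum>s\<in>?S. if wmul a s = w then f a * smult g h s else 0)"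
    by (simp add: gh sum_distrib_left if_zero_sum mult_if_zero cong: if_cong)
  also have "\<dots> = smult f (smult g h) w"
    using fin supp_smult by (intro smult_expand[symmetric]) auto
  finally show "smult (smult f g) h w = smult f (smult g h) w" .
qed

lemma smult_left_commute:
  assumes "f \<in> finsupp" "g \<in> finsupp" "h \<in> finsupp" "smult f g = smult g f"
  shows "smult f (smult g h) = smult g (smult f h)"
  by (metis assms smult_assoc)

lemma smult_sadd_left:
  assumes "f \<in> finsupp" "g \<in> finsupp" "h \<in> finsupp"
  shows "smult (sadd f g) h = sadd (smult f h) (smult g h)"
proof
  fix w
  have fin: "finite (supp f \<union> supp g)" "finite (supp h)"
    using assms by (auto simp: finsupp_def)
  then show "smult (sadd f g) h w = sadd (smult f h) (smult g h) w"
    using supp_sadd[of f g]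
    by (simp add: smult_expand[OF fin, of _ h] sadd_def distrib_right sum.distrib
        if_zero_add cong: if_cong)
qed

lemma smult_sadd_right:
  assumes "f \<in> finsupp" "g \<in> finsupp" "h \<in> finsupp"
  shows "smult h (sadd f g) = sadd (smult h f) (smult h g)"
proof
  fix w
  have fin: "finite (supp h)" "finite (supp f \<union> supp g)"
    using assms by (auto simp: finsupp_def)
  then show "smult h (sadd f g) w = sadd (smult h f) (smult h g) w"
    using supp_sadd[of f g]
    by (simp add: smult_expand[OF fin, of h] sadd_def distrib_left sum.distrib
        if_zero_add cong: if_cong)
qed

lemma smult_sscale_left:
  assumes "f \<in> finsupp" "h \<in> finsupp"
  shows "smult (sscale c f) h = sscale c (smult f h)"
proof
  fix w
  have fin: "finite (supp f)" "finite (supp h)"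
    using assms by (auto simp: finsupp_def)
  then show "smult (sscale c f) h w = sscale c (smult f h) w"
    using supp_sscale[of c f]
    by (simp add: smult_expand[OF fin, of _ h] sscale_def sum_distrib_left mult_if_zero
        mult.assoc cong: if_cong)
qed

lemma smult_sscale_right:
  assumes "f \<in> finsupp" "h \<in> finsupp"
  shows "smult h (sscale c f) = sscale c (smult h f)"
proof
  fix w
  have fin: "finite (supp h)" "finite (supp f)"
    using assms by (auto simp: finsupp_def)
  then show "smult h (sscale c f) w = sscale c (smult h f) w"
    using supp_sscale[of c f]
    by (simp add: smult_expand[OF fin, of h] sscale_def sum_distrib_left mult_if_zero
        mult.left_commute cong: if_cong)
qed

lemma ssub_eq_sadd_sscale: "ssub f g = sadd f (sscale (-1) g)"
  by (simp add: ssub_def sadd_def sscale_def)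

lemma smult_ssub_left:
  assumes "f \<in> finsupp" "g \<in> finsupp" "h \<in> finsupp"
  shows "smult (ssub f g) h = ssub (smult f h) (smult g h)"
  using assms by (simp add: ssub_eq_sadd_sscale smult_sadd_left smult_sscale_left)

lemma smult_ssub_right:
  assumes "f \<in> finsupp" "g \<in> finsupp" "h \<in> finsupp"
  shows "smult h (ssub f g) = ssub (smult h f) (smult h g)"
  using assms by (simp add: ssub_eq_sadd_sscale smult_sadd_right smult_sscale_right)

lemma smult_szero_left [simp]: "smult szero h = szero"
  and smult_szero_right [simp]: "smult h szero = szero"
  by (simp_all add: smult_def szero_def[symmetric])

lemma smult_sbasis: "smult (sbasis u) (sbasis v) = sbasis (wmul u v)"
proof
  fix w
  show "smult (sbasis u) (sbasis v) w = sbasis (wmul u v) w"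
    by (subst smult_expand[of "{u}" "{v}"]) (auto simp: sbasis_def supp_def)
qed

lemma smult_sone_left [simp]: "f \<in> finsupp \<Longrightarrow> smult sone f = f"
  and smult_sone_right [simp]: "f \<in> finsupp \<Longrightarrow> smult f sone = f"
  by (auto simp: fun_eq_iff smult_expand[of "{(zexp, zexp)}" "supp f"]
      smult_expand[of "supp f" "{(zexp, zexp)}"] finsupp_def sone_def supp_def)

lemma Sn_smult [simp]: "f \<in> Sn n \<Longrightarrow> g \<in> Sn n \<Longrightarrow> smult f g \<in> Sn n"
  using supp_smult[of f g] wmul_words[of _ n] finsupp_smult[of f g]
  by (fastforce simp: Sn_def finsupp_def)

lemma zexp_words [simp]: "(zexp, zexp) \<in> words n"
  by (simp add: words_def)

lemma Sn_szero [simp]: "szero \<in> Sn n"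
  and Sn_sbasis [simp]: "u \<in> words n \<Longrightarrow> sbasis u \<in> Sn n"
  and Sn_sone [simp]: "sone \<in> Sn n"
  by (simp_all add: Sn_def sone_eq_sbasis)

lemma Sn_sadd [simp]: "f \<in> Sn n \<Longrightarrow> g \<in> Sn n \<Longrightarrow> sadd f g \<in> Sn n"
  and Sn_ssub [simp]: "f \<in> Sn n \<Longrightarrow> g \<in> Sn n \<Longrightarrow> ssub f g \<in> Sn n"
  and Sn_sscale [simp]: "f \<in> Sn n \<Longrightarrow> sscale c f \<in> Sn n"
  using supp_sadd[of f g] supp_ssub[of f g] supp_sscale[of c f]
    finsupp_sadd[of f g] finsupp_ssub[of f g] finsupp_sscale[of f c]
  by (auto simp: Sn_def finsupp_def)

definition wvars :: "word \<Rightarrow> nat set" where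
  "wvars w = {i. fst w i \<noteq> 0 \<or> snd w i \<noteq> 0}"

definition svars :: "(word \<Rightarrow> 'k::field) \<Rightarrow> nat set" where
  "svars f = \<Union> (wvars ` supp f)"

lemma wmul_commute_disjoint_wvars:
  assumes "wvars u \<inter> wvars v = {}"
  shows "wmul u v = wmul v u"
proof -
  have disj: "(fst u i = 0 \<and> snd u i = 0) \<or> (fst v i = 0 \<and> snd v i = 0)" for i
    using assms by (auto simp: wvars_def)
  have "fst (wmul u v) i = fst (wmul v u) i" "snd (wmul u v) i = snd (wmul v u) i" for i
    using disj[of i] by (auto simp: wmul_def)
  then show ?thesis
    by (simp add: prod_eq_iff fun_eq_iff)
qed

lemma smult_commute:
  assumes "f \<in> finsupp" "g \<in> finsupp" "svars f \<inter> svars g = {}"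
  shows "smult f g = smult g f"
proof
  fix w
  have fin: "finite (supp f)" "finite (supp g)"
    using assms by (auto simp: finsupp_def)
  have comm: "wmul u v = wmul v u" if "u \<in> supp f" "v \<in> supp g" for u v
    using assms(3) that by (intro wmul_commute_disjoint_wvars) (auto simp: svars_def)
  have "smult f g w = (\<Sum>u\<in>supp f. \<Sum>v\<in>supp g. if wmul u v = w then f u * g v else 0)"
    using fin by (intro smult_expand) auto
  also have "\<dots> = (\<Sum>v\<in>supp g. \<Sum>u\<in>supp f. if wmul v u = w then g v * f u else 0)"
    by (subst sum.swap) (auto intro!: sum.cong simp: comm mult.commute)
  also have "\<dots> = smult g f w"
    using fin by (intro smult_expand[symmetric]) auto
  finally show "smult f g w = smult g f w" .
qed

lemma svars_smult: "svars (smult f g) \<subseteq> svars f \<union> svars g"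
proof
  fix i assume "i \<in> svars (smult f g)"
  then obtain w where w: "w \<in> supp (smult f g)" "i \<in> wvars w"
    by (auto simp: svars_def)
  then obtain u v where "u \<in> supp f" "v \<in> supp g" "w = wmul u v"
    using supp_smult[of f g] by auto
  moreover have "wvars (wmul u v) \<subseteq> wvars u \<union> wvars v"
    by (auto simp: wvars_def wmul_def)
  ultimately show "i \<in> svars f \<union> svars g"
    using w(2) by (auto simp: svars_def)
qed

lemma svars_ssub: "svars (ssub f g) \<subseteq> svars f \<union> svars g"
  using supp_ssub[of f g] by (auto simp: svars_def)

lemma svars_sbasis [simp]: "svars (sbasis u) = wvars u"
  by (simp add: svars_def)

lemma svars_sone [simp]: "svars sone = {}"
  by (simp add: sone_eq_sbasis wvars_def)

definition sflip :: "(word \<Rightarrow> 'k::field) \<Rightarrow> (word \<Rightarrow> 'k)" where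
  "sflip f = f \<circ> prod.swap"

lemma sflip_sflip [simp]: "sflip (sflip f) = f"
  by (simp add: sflip_def fun_eq_iff)

lemma inj_sflip: "inj sflip"
  by (metis injI sflip_sflip)

lemma supp_sflip: "supp (sflip f) = prod.swap ` supp f"
  by (auto simp: supp_def sflip_def image_iff)

lemma finsupp_sflip [simp]: "sflip f \<in> finsupp \<longleftrightarrow> f \<in> finsupp"
  by (simp add: finsupp_def supp_sflip finite_image_iff)

lemma Sn_sflip [simp]: "sflip f \<in> Sn n \<longleftrightarrow> f \<in> Sn n"
  by (auto simp: Sn_def supp_sflip finite_image_iff words_def)

lemma sflip_szero [simp]: "sflip szero = szero"
  and sflip_sone [simp]: "sflip sone = sone"
  and sflip_sadd: "sflip (sadd f g) = sadd (sflip f) (sflip g)"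
  and sflip_ssub: "sflip (ssub f g) = ssub (sflip f) (sflip g)"
  and sflip_sscale: "sflip (sscale c f) = sscale c (sflip f)"
  by (auto simp: sflip_def szero_def sone_def sbasis_def sadd_def ssub_def sscale_def fun_eq_iff)

lemma sflip_sbasis: "sflip (sbasis u) = sbasis (prod.swap u)"
  by (cases u) (auto simp: sflip_def sbasis_def fun_eq_iff)

lemma sflip_eq_szero_iff [simp]: "sflip f = szero \<longleftrightarrow> f = szero"
  by (metis sflip_sflip sflip_szero)

lemma swap_eq_iff: "prod.swap x = w \<longleftrightarrow> x = prod.swap w"
  by auto

lemma sflip_smult:
  assumes "f \<in> finsupp" "g \<in> finsupp"
  shows "sflip (smult f g) = smult (sflip g) (sflip f)"
proof
  fix w
  have fin: "finite (supp f)" "finite (supp g)"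
    using assms by (auto simp: finsupp_def)
  have "smult (sflip g) (sflip f) w = (\<Sum>u\<in>prod.swap ` supp g. \<Sum>v\<in>prod.swap ` supp f.
      if wmul u v = w then sflip g u * sflip f v else 0)"
    using fin by (intro smult_expand) (auto simp: supp_sflip)
  also have "\<dots>
      = (\<Sum>u\<in>supp g. \<Sum>v\<in>supp f. if wmul (prod.swap u) (prod.swap v) = w then g u * f v else 0)"
    by (simp add: sum.reindex sflip_def cong: if_cong)
  also have "\<dots> = smult f g (prod.swap w)"
    by (simp add: smult_expand[OF fin order.refl order.refl] wmul_swap sum.swap[of _ "supp g"]
        mult.commute swap_eq_iff cong: if_cong)
  finally show "sflip (smult f g) w = smult (sflip g) (sflip f) w"
    by (simp add: sflip_def)
qed

lemma sflip_image_sflip_image [simp]: "sflip ` sflip ` A = A"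
  by (simp add: image_image)

lemma sflip_image_eq_szero_iff [simp]: "sflip ` A = {szero} \<longleftrightarrow> A = {szero}"
  by (metis image_empty image_insert sflip_image_sflip_image sflip_szero)

lemma sflip_image_eq: "sflip ` A \<subseteq> A \<Longrightarrow> sflip ` A = A"
  by (metis image_mono sflip_image_sflip_image subset_antisym)

section \<open>Linear spans\<close>

lemma sspan_subset_closed:
  assumes "x \<in> sspan A" "A \<subseteq> B" "szero \<in> B" "\<And>a b. a \<in> B \<Longrightarrow> b \<in> B \<Longrightarrow> sadd a b \<in> B"
    "\<And>c a. a \<in> B \<Longrightarrow> sscale c a \<in> B"
  shows "x \<in> B"
  using assms(1) by induction (use assms in auto)

lemma sspan_subset: "A \<subseteq> sspan B \<Longrightarrow> sspan A \<subseteq> sspan B"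
  by (auto elim!: sspan_subset_closed intro: sspan.intros)

lemma sspan_mono: "A \<subseteq> B \<Longrightarrow> sspan A \<subseteq> sspan B"
  by (auto elim!: sspan_subset_closed intro: sspan.intros)

lemma sspan_finsupp: "A \<subseteq> finsupp \<Longrightarrow> sspan A \<subseteq> finsupp"
  by (auto elim: sspan_subset_closed)

lemma sspan_Sn: "A \<subseteq> Sn n \<Longrightarrow> sspan A \<subseteq> Sn n"
  by (auto elim!: sspan_subset_closed)

lemma sspan_szero: "sspan {szero} = {szero}"
proof
  show "sspan {szero} \<subseteq> {szero}"
  proof
    fix x assume "x \<in> sspan {szero}"
    then show "x \<in> {szero}"
      by (rule sspan_subset_closed) (auto simp: sadd_def sscale_def szero_def)
  qed
qed (auto intro: sspan.zero)

lemma sspan_sbasis: "finite S \<Longrightarrow> supp f \<subseteq> S \<Longrightarrow> f \<in> sspan (sbasis ` S)"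
proof (induction S arbitrary: f rule: finite_induct)
  case empty
  then have "f = szero"
    by (auto simp: supp_def szero_def fun_eq_iff)
  then show ?case
    by (simp add: sspan.zero)
next
  case (insert u S)
  have "supp (f(u := 0)) \<subseteq> S"
    using insert by (auto simp: supp_def)
  then have "f(u := 0) \<in> sspan (sbasis ` S)"
    using insert.IH by blast
  then have "f(u := 0) \<in> sspan (sbasis ` insert u S)"
    using sspan_mono[of "sbasis ` S" "sbasis ` insert u S"] by blast
  moreover have "sscale (f u) (sbasis u) \<in> sspan (sbasis ` insert u S)"
    by (auto intro: sspan.intros)
  moreover have "f = sadd (sscale (f u) (sbasis u)) (f(u := 0))"
    by (auto simp: fun_eq_iff sadd_def sscale_def sbasis_def)
  ultimately show ?case
    by (metis sspan.add)
qed

lemma finsupp_in_sspan_sbasis: "f \<in> finsupp \<Longrightarrow> f \<in> sspan (sbasis ` supp f)"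
  by (rule sspan_sbasis) (auto simp: finsupp_def)

lemma sspan_image_linear:
  assumes "x \<in> sspan A" "A \<subseteq> finsupp" "L szero = szero"
    "\<And>a b. a \<in> finsupp \<Longrightarrow> b \<in> finsupp \<Longrightarrow> L (sadd a b) = sadd (L a) (L b)"
    "\<And>c a. a \<in> finsupp \<Longrightarrow> L (sscale c a) = sscale c (L a)"
  shows "L x \<in> sspan (L ` A)"
proof -
  from assms(1) have "L x \<in> sspan (L ` A) \<and> x \<in> finsupp"
  proof induction
    case zero
    then show ?case by (simp add: assms(3) sspan.zero)
  next
    case (base a)
    then show ?case using assms(2) by (auto intro: sspan.base)
  next
    case (add a b)
    then show ?case by (simp add: assms(4) sspan.add)
  next
    case (scale a c)
    then show ?case by (simp add: assms(5) sspan.scale)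
  qed
  then show ?thesis ..
qed

lemma smult_sspan_sspan:
  assumes "a \<in> sspan A" "b \<in> sspan B" "A \<subseteq> finsupp" "B \<subseteq> finsupp"
  shows "smult a b \<in> sspan {smult u v | u v. u \<in> A \<and> v \<in> B}"
proof -
  let ?C = "{smult u v | u v. u \<in> A \<and> v \<in> B}"
  have "b \<in> finsupp"
    using assms sspan_finsupp by blast
  then have "smult a b \<in> sspan ((\<lambda>u. smult u b) ` A)"
    by (intro sspan_image_linear[OF assms(1,3)]) (simp_all add: smult_sadd_left smult_sscale_left)
  moreover have "(\<lambda>u. smult u b) ` A \<subseteq> sspan ?C"
  proof
    fix y assume "y \<in> (\<lambda>u. smult u b) ` A"
    then obtain u where u: "u \<in> A" "y = smult u b"
      by blast
    then have "smult u b \<in> sspan (smult u ` B)"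
      using assms(3) by (intro sspan_image_linear[OF assms(2,4)])
        (auto simp: smult_sadd_right smult_sscale_right)
    moreover have "smult u ` B \<subseteq> ?C"
      using u by blast
    ultimately show "y \<in> sspan ?C"
      using u sspan_mono by blast
  qed
  ultimately show ?thesis
    using sspan_subset by blast
qed

lemma foldr_smult_sspan:
  assumes "distinct is" "\<forall>i\<in>set is. f i \<in> sspan (A i)" "\<And>i. A i \<subseteq> finsupp"
  shows "foldr smult (map f is) sone \<in> sspan {foldr smult (map g is) sone | g. \<forall>i\<in>set is. g i \<in> A i}"
  using assms(1,2)
proof (induction "is")
  case Nil
  then show ?case
    by (auto intro: sspan.base)
next
  case (Cons j "is")
  let ?G = "{foldr smult (map g is) sone | g. \<forall>i\<in>set is. g i \<in> A i}"
  let ?G' = "{foldr smult (map g (j # is)) sone | g. \<forall>i\<in>set (j # is). g i \<in> A i}"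
  have j: "j \<notin> set is"
    using Cons.prems by simp
  have "foldr smult (map g is) sone \<in> finsupp" if "\<forall>i\<in>set is. g i \<in> A i" for g
    using that by (induction "is") (auto intro!: finsupp_smult[OF subsetD[OF assms(3)]])
  then have "?G \<subseteq> finsupp"
    by blast
  then have "smult (f j) (foldr smult (map f is) sone) \<in> sspan {smult u v | u v. u \<in> A j \<and> v \<in> ?G}"
    using Cons assms(3) by (intro smult_sspan_sspan) auto
  moreover have "{smult u v | u v. u \<in> A j \<and> v \<in> ?G} \<subseteq> ?G'"
  proof
    fix x assume "x \<in> {smult u v | u v. u \<in> A j \<and> v \<in> ?G}"
    then obtain u g where ug: "u \<in> A j" "\<forall>i\<in>set is. g i \<in> A i"
        "x = smult u (foldr smult (map g is) sone)"
      by blast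
    moreover have "foldr smult (map (g(j := u)) (j # is)) sone = smult u (foldr smult (map g is) sone)"
      using j by simp
    ultimately have "x = foldr smult (map (g(j := u)) (j # is)) sone"
      by simp
    moreover have "\<forall>i\<in>set (j # is). (g(j := u)) i \<in> A i"
      using ug by auto
    ultimately show "x \<in> ?G'"
      by blast
  qed
  ultimately have "smult (f j) (foldr smult (map f is) sone) \<in> sspan ?G'"
    using sspan_mono by blast
  then show ?case
    by simp
qed

lemma sflip_sspan: "sflip ` sspan A = sspan (sflip ` A)"
proof -
  have *: "sflip x \<in> sspan (sflip ` A)" if "x \<in> sspan A" for x :: "word \<Rightarrow> 'k::field" and A
    using that by induction (auto simp: sflip_sadd sflip_sscale intro: sspan.intros)
  show ?thesis
  proof
    show "sflip ` sspan A \<subseteq> sspan (sflip ` A)"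
      using * by blast
    show "sspan (sflip ` A) \<subseteq> sflip ` sspan A"
    proof
      fix y assume "y \<in> sspan (sflip ` A)"
      then have "sflip y \<in> sspan A"
        using *[of y "sflip ` A"] by (simp add: image_image)
      then show "y \<in> sflip ` sspan A"
        by (metis image_eqI sflip_sflip)
    qed
  qed
qed

section \<open>Monomials, projections and matrix units\<close>

definition exp_at :: "nat \<Rightarrow> nat \<Rightarrow> nat \<Rightarrow> nat" where
  "exp_at i k = (\<lambda>j. if j = i then k else 0)"

text \<open>\<open>eunit i\<close> equals \<open>exp_at i 1\<close>; it is a separate constant because the simplifier would
  rewrite the latter to \<open>exp_at i (Suc 0)\<close>.\<close>

definition eunit :: "nat \<Rightarrow> nat \<Rightarrow> nat" where
  "eunit i = (\<lambda>j. if j = i then 1 else 0)"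

definition exps :: "nat \<Rightarrow> (nat \<Rightarrow> nat) set" where
  "exps n = {k. \<forall>i\<ge>n. k i = 0}"

definition xmon :: "(nat \<Rightarrow> nat) \<Rightarrow> word \<Rightarrow> 'k::field" where
  "xmon k = sbasis (k, zexp)"

definition ymon :: "(nat \<Rightarrow> nat) \<Rightarrow> word \<Rightarrow> 'k::field" where
  "ymon l = sbasis (zexp, l)"

definition proj :: "nat \<Rightarrow> word \<Rightarrow> 'k::field" where
  "proj i = ssub sone (sbasis (eunit i, eunit i))"

definition projs :: "nat list \<Rightarrow> word \<Rightarrow> 'k::field" where
  "projs is = foldr smult (map proj is) sone"

definition idem :: "nat \<Rightarrow> word \<Rightarrow> 'k::field" where
  "idem n = projs [0..<n]"

definition munit :: "nat \<Rightarrow> (nat \<Rightarrow> nat) \<Rightarrow> (nat \<Rightarrow> nat) \<Rightarrow> word \<Rightarrow> 'k::field" where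
  "munit n k l = smult (xmon k) (smult (idem n) (ymon l))"

lemma exps_zexp [simp]: "zexp \<in> exps n"
  by (simp add: exps_def)

lemma words_iff_exps: "(k, l) \<in> words n \<longleftrightarrow> k \<in> exps n \<and> l \<in> exps n"
  by (auto simp: words_def exps_def)

lemma xmon_zexp [simp]: "xmon zexp = sone"
  and ymon_zexp [simp]: "ymon zexp = sone"
  by (simp_all add: xmon_def ymon_def sone_eq_sbasis)

lemma projs_Nil [simp]: "projs [] = sone"
  and projs_Cons [simp]: "projs (i # is) = smult (proj i) (projs is)"
  by (simp_all add: projs_def)

lemma finsupp_xmon [simp]: "xmon k \<in> finsupp"
  and finsupp_ymon [simp]: "ymon l \<in> finsupp"
  and finsupp_proj [simp]: "proj i \<in> finsupp"
  by (simp_all add: xmon_def ymon_def proj_def)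

lemma finsupp_projs [simp]: "projs is \<in> finsupp"
  by (induction "is") simp_all

lemma finsupp_idem [simp]: "idem n \<in> finsupp"
  and finsupp_munit [simp]: "munit n k l \<in> finsupp"
  by (simp_all add: idem_def munit_def)

lemma Sn_xmon [simp]: "k \<in> exps n \<Longrightarrow> xmon k \<in> Sn n"
  and Sn_ymon [simp]: "l \<in> exps n \<Longrightarrow> ymon l \<in> Sn n"
  and Sn_proj [simp]: "i < n \<Longrightarrow> proj i \<in> Sn n"
  by (simp_all add: xmon_def ymon_def proj_def words_iff_exps exps_def eunit_def)

lemma Sn_projs: "set is \<subseteq> {..<n} \<Longrightarrow> projs is \<in> Sn n"
  by (induction "is") simp_all

lemma Sn_idem [simp]: "idem n \<in> Sn n"
  by (simp add: idem_def Sn_projs subset_eq)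

lemma Sn_munit [simp]: "k \<in> exps n \<Longrightarrow> l \<in> exps n \<Longrightarrow> munit n k l \<in> Sn n"
  by (simp add: munit_def)

lemma sbasis_eq_xmon_ymon: "sbasis (k, l) = smult (xmon k) (ymon l)"
  by (simp add: xmon_def ymon_def smult_sbasis wmul_def)

lemma sflip_xmon: "sflip (xmon k) = ymon k"
  and sflip_ymon: "sflip (ymon k) = xmon k"
  and sflip_proj: "sflip (proj i) = proj i"
  by (simp_all add: xmon_def ymon_def proj_def sflip_sbasis sflip_ssub)

lemma svars_proj: "svars (proj i) \<subseteq> {i}"
  using svars_ssub[of sone "sbasis (eunit i, eunit i)"]
  by (auto simp: proj_def wvars_def eunit_def split: if_splits)

lemma svars_projs: "svars (projs is) \<subseteq> set is"
proof (induction "is")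
  case (Cons i "is")
  then show ?case
    using svars_smult[of "proj i" "projs is"] svars_proj[of i] by auto
qed simp

lemma proj_commute_projs: "i \<notin> set is \<Longrightarrow> smult (proj i) (projs is) = smult (projs is) (proj i)"
  using svars_proj[of i] svars_projs[of "is"] by (intro smult_commute) auto

lemma projs_remove1:
  assumes "i \<in> set is"
  shows "(projs is :: word \<Rightarrow> 'k::field) = smult (proj i) (projs (remove1 i is))"
  using assms
proof (induction "is")
  case (Cons j "is")
  show ?case
  proof (cases "j = i")
    case False
    then have comm: "smult (proj j) (proj i) = (smult (proj i) (proj j) :: word \<Rightarrow> 'k)"
      using svars_proj[of i] svars_proj[of j] by (intro smult_commute) auto
    have "i \<in> set is"
      using False Cons.prems by simp
    then have "(projs (j # is) :: word \<Rightarrow> 'k) = smult (smult (proj j) (proj i)) (projs (remove1 i is))"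
      using Cons.IH by (simp add: smult_assoc)
    also have "\<dots> = smult (smult (proj i) (proj j)) (projs (remove1 i is))"
      by (subst comm) (rule refl)
    also have "\<dots> = smult (proj i) (projs (remove1 i (j # is)))"
      using False by (simp add: smult_assoc)
    finally show ?thesis .
  qed simp
qed simp

lemma sflip_projs: "distinct is \<Longrightarrow> sflip (projs is) = projs is"
  by (induction "is") (simp_all add: sflip_smult sflip_proj proj_commute_projs)

lemma sflip_idem: "sflip (idem n) = idem n"
  by (simp add: idem_def sflip_projs)

lemma sflip_munit: "sflip (munit n k l) = munit n l k"
  by (simp add: munit_def sflip_smult sflip_xmon sflip_ymon sflip_idem smult_assoc)

lemma proj_idem: "smult (proj i) (proj i) = proj i"
  by (simp add: proj_def smult_ssub_left smult_ssub_right smult_sbasis)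
    (simp add: wmul_def eunit_def ssub_def szero_def sone_def fun_eq_iff)

lemma projs_idem: "distinct is \<Longrightarrow> smult (projs is) (projs is) = (projs is :: word \<Rightarrow> 'k::field)"
proof (induction "is")
  case (Cons i "is")
  then have comm: "smult (projs is) (proj i) = (smult (proj i) (projs is) :: word \<Rightarrow> 'k)"
    by (simp add: proj_commute_projs)
  have "smult (projs (i # is)) (projs (i # is))
      = (smult (proj i) (smult (smult (projs is) (proj i)) (projs is)) :: word \<Rightarrow> 'k)"
    by (simp add: smult_assoc)
  also have "\<dots> = smult (smult (proj i) (proj i)) (smult (projs is) (projs is))"
    by (simp only: comm) (simp add: smult_assoc)
  also have "\<dots> = projs (i # is)"
    using Cons.IH Cons.prems by (simp add: proj_idem)
  finally show ?case .
qed simp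

lemma idem_idem: "smult (idem n) (idem n) = idem n"
  by (simp add: idem_def projs_idem)

lemma ymon_proj: "smult (ymon (eunit i)) (proj i) = szero"
  by (simp add: ymon_def proj_def smult_ssub_right smult_sbasis wmul_def eunit_def)

lemma ymon_idem:
  assumes "l \<in> exps n" "l \<noteq> zexp"
  shows "smult (ymon l) (idem n) = (szero :: word \<Rightarrow> 'k::field)"
proof -
  obtain i where i: "l i \<noteq> 0"
    using assms(2) by auto
  then have "i < n"
    using assms(1) by (auto simp: exps_def intro: ccontr)
  define l' where "l' = (\<lambda>j. if j = i then l i - 1 else l j)"
  have "wmul (zexp, l') (zexp, eunit i) = (zexp, l)"
    using i by (auto simp: wmul_def l'_def eunit_def fun_eq_iff)
  then have "(ymon l :: word \<Rightarrow> 'k) = smult (ymon l') (ymon (eunit i))"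
    by (simp add: ymon_def smult_sbasis)
  moreover have "(idem n :: word \<Rightarrow> 'k) = smult (proj i) (projs (remove1 i [0..<n]))"
    using \<open>i < n\<close> by (simp add: idem_def projs_remove1)
  ultimately show ?thesis
    by (simp add: smult_assoc ymon_proj flip: smult_assoc[of "ymon (eunit i)"])
qed

lemma idem_xmon:
  assumes "k \<in> exps n" "k \<noteq> zexp"
  shows "smult (idem n) (xmon k) = (szero :: word \<Rightarrow> 'k::field)"
proof -
  have "sflip (smult (idem n) (xmon k)) = (szero :: word \<Rightarrow> 'k)"
    using assms by (simp add: sflip_smult sflip_idem sflip_xmon ymon_idem)
  then show ?thesis
    by simp
qed

lemma smult_proj_coeff_zexp:
  assumes "f \<in> finsupp"
  shows "smult (proj i) f (zexp, zexp) = f (zexp, zexp)"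
proof -
  have "wmul (eunit i, eunit i) v \<noteq> (zexp, zexp)" for v
  proof
    assume "wmul (eunit i, eunit i) v = (zexp, zexp)"
    then have "fst (wmul (eunit i, eunit i) v) i = 0"
      by simp
    then show False
      by (simp add: wmul_def eunit_def)
  qed
  then have "smult (sbasis (eunit i, eunit i)) f (zexp, zexp) = 0"
    using assms by (subst smult_expand[of "{(eunit i, eunit i)}" "supp f"])
      (auto simp: finsupp_def)
  moreover have "smult (proj i) f = ssub f (smult (sbasis (eunit i, eunit i)) f)"
    using assms by (simp add: proj_def smult_ssub_left)
  ultimately show ?thesis
    by (simp add: ssub_def)
qed

lemma idem_neq_szero: "idem n \<noteq> (szero :: word \<Rightarrow> 'k::field)"
proof -
  have "projs is (zexp, zexp) = (1 :: 'k)" for "is"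
    by (induction "is") (simp_all add: smult_proj_coeff_zexp sone_def)
  then have "idem n (zexp, zexp) = (1 :: 'k)"
    by (simp add: idem_def)
  then show ?thesis
    by (auto simp: szero_def)
qed

lemma idem_sbasis_idem_smult:
  assumes "w \<in> words n" "h \<in> finsupp"
  shows "smult (idem n) (smult (sbasis w) (smult (idem n) h))
    = (if w = (zexp, zexp) then smult (idem n) h else (szero :: word \<Rightarrow> 'k::field))"
proof (cases w)
  case (Pair k l)
  then have kl: "k \<in> exps n" "l \<in> exps n"
    using assms by (simp_all add: words_iff_exps)
  show ?thesis
  proof (cases "k = zexp")
    case False
    then show ?thesis
      using kl Pair assms(2) by (simp add: sbasis_eq_xmon_ymon smult_assoc idem_xmon
          flip: smult_assoc[of "idem n" "xmon k"])
  next
    case True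
    show ?thesis
    proof (cases "l = zexp")
      case False
      then show ?thesis
        using kl Pair assms(2) \<open>k = zexp\<close> by (simp add: sbasis_eq_xmon_ymon ymon_idem
            flip: smult_assoc[of "ymon l" "idem n"])
    next
      case True
      then show ?thesis
        using \<open>k = zexp\<close> Pair assms(2) by (simp add: sone_eq_sbasis[symmetric] idem_idem
            flip: smult_assoc[of "idem n" "idem n"])
    qed
  qed
qed

lemma idem_sbasis_idem:
  assumes "w \<in> words n"
  shows "smult (idem n) (smult (sbasis w) (idem n))
    = (if w = (zexp, zexp) then idem n else (szero :: word \<Rightarrow> 'k::field))"
proof -
  have "smult (idem n) (smult (sbasis w) (smult (idem n) sone))
    = (if w = (zexp, zexp) then smult (idem n) sone else (szero :: word \<Rightarrow> 'k))"
    using assms by (rule idem_sbasis_idem_smult) simp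
  then show ?thesis
    by simp
qed

lemma munit_zexp_zexp: "munit n zexp zexp = idem n"
  by (simp add: munit_def)

lemma ymon_xmon: "smult (ymon l) (xmon k) = sbasis (wmul (zexp, l) (k, zexp))"
  by (simp add: xmon_def ymon_def smult_sbasis)

lemma munit_mult:
  assumes "l \<in> exps n" "k' \<in> exps n"
  shows "smult (munit n k l) (munit n k' l')
    = (if l = k' then munit n k l' else (szero :: word \<Rightarrow> 'k::field))"
proof -
  have w: "wmul (zexp, l) (k', zexp) \<in> words n"
    using assms by (auto simp: wmul_def words_iff_exps exps_def)
  have "smult (munit n k l) (munit n k' l') = smult (xmon k)
      (smult (idem n) (smult (smult (ymon l) (xmon k')) (smult (idem n) (ymon l'))) :: word \<Rightarrow> 'k)"
    by (simp add: munit_def smult_assoc)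
  also have "\<dots> = smult (xmon k) (if wmul (zexp, l) (k', zexp) = (zexp, zexp)
      then smult (idem n) (ymon l') else szero)"
    by (simp only: ymon_xmon idem_sbasis_idem_smult[OF w finsupp_ymon])
  also have "wmul (zexp, l) (k', zexp) = (zexp, zexp) \<longleftrightarrow> l = k'"
    by (auto simp: wmul_def fun_eq_iff intro: antisym)
  finally show ?thesis
    by (simp add: munit_def)
qed

lemma sbasis_munit:
  assumes "(a, b) \<in> words n" "k \<in> exps n"
  shows "smult (sbasis (a, b)) (munit n k l)
    = (if \<forall>i. b i \<le> k i then munit n (\<lambda>i. a i + (k i - b i)) l else (szero :: word \<Rightarrow> 'k::field))"
proof -
  let ?a = "\<lambda>i. a i + (k i - b i)" and ?b = "\<lambda>i. b i - k i"
  have b: "?b \<in> exps n"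
    using assms by (simp add: words_iff_exps exps_def)
  have eq: "smult (sbasis (a, b)) (xmon k) = (smult (xmon ?a) (ymon ?b) :: word \<Rightarrow> 'k)"
    by (simp add: xmon_def ymon_def smult_sbasis wmul_def)
  have "smult (sbasis (a, b)) (munit n k l)
      = smult (smult (sbasis (a, b)) (xmon k)) (smult (idem n) (ymon l) :: word \<Rightarrow> 'k)"
    by (simp add: munit_def smult_assoc)
  also have "\<dots> = smult (xmon ?a) (smult (smult (ymon ?b) (idem n)) (ymon l))"
    by (simp add: eq smult_assoc)
  finally have prod: "smult (sbasis (a, b)) (munit n k l)
      = smult (xmon ?a) (smult (smult (ymon ?b) (idem n)) (ymon l) :: word \<Rightarrow> 'k)" .
  show ?thesis
  proof (cases "\<forall>i. b i \<le> k i")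
    case True
    then have "?b = zexp"
      by (simp add: fun_eq_iff)
    with prod True show ?thesis
      by (simp add: munit_def)
  next
    case False
    then have "?b \<noteq> zexp"
      by (auto simp: fun_eq_iff)
    with b have "smult (ymon ?b) (idem n) = (szero :: word \<Rightarrow> 'k)"
      by (rule ymon_idem)
    with prod False show ?thesis
      by auto
  qed
qed

section \<open>The ideal \<open>F\<^sub>n\<close> is spanned by the matrix units\<close>

definition fgen :: "nat \<Rightarrow> nat \<Rightarrow> nat \<Rightarrow> word \<Rightarrow> 'k::field" where
  "fgen i k l = smult (xmon (exp_at i k)) (smult (proj i) (ymon (exp_at i l)))"

lemma finsupp_fgen [simp]: "fgen i k l \<in> finsupp"
  by (simp add: fgen_def)

lemma xmon_xmon: "smult (xmon k) (xmon k') = xmon (\<lambda>i. k i + k' i)"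
  and ymon_ymon: "smult (ymon l) (ymon l') = ymon (\<lambda>i. l i + l' i)"
  by (simp_all add: xmon_def ymon_def smult_sbasis wmul_def add.commute)

lemma X_eq_xmon: "X i = xmon (eunit i)"
  and Y_eq_ymon: "Y i = ymon (eunit i)"
  by (simp_all add: X_def Y_def xmon_def ymon_def sbasis_def eunit_def)

lemma exp_at_Suc: "(\<lambda>j. eunit i j + exp_at i k j) = exp_at i (Suc k)"
  by (simp add: eunit_def exp_at_def fun_eq_iff)

lemma spow_X: "spow (X i) k = xmon (exp_at i k)"
  by (induction k) (simp_all add: spow_def exp_at_def[of _ 0] X_eq_xmon xmon_xmon exp_at_Suc)

lemma spow_Y: "spow (Y i) k = ymon (exp_at i k)"
  by (induction k) (simp_all add: spow_def exp_at_def[of _ 0] Y_eq_ymon ymon_ymon exp_at_Suc)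

lemma Fi_generator_eq_fgen:
  "ssub (smult (spow (X i) k) (spow (Y i) l)) (smult (spow (X i) (Suc k)) (spow (Y i) (Suc l)))
    = fgen i k l"
proof -
  have "wmul (exp_at i k, zexp) (wmul (eunit i, eunit i) (zexp, exp_at i l))
      = (exp_at i (Suc k), exp_at i (Suc l))"
    by (simp add: wmul_def exp_at_def eunit_def fun_eq_iff)
  then show ?thesis
    by (simp add: spow_X spow_Y fgen_def proj_def xmon_def ymon_def smult_ssub_left
        smult_ssub_right smult_sbasis sone_eq_sbasis[symmetric])
      (simp add: wmul_def)
qed

lemma Fi_eq: "Fi i = sspan {fgen i k l | k l. True}"
  by (simp add: Fi_def Fi_generator_eq_fgen)

definition exp_on :: "(nat \<Rightarrow> nat) \<Rightarrow> nat set \<Rightarrow> nat \<Rightarrow> nat" where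
  "exp_on k A = (\<lambda>j. if j \<in> A then k j else 0)"

lemma svars_xmon: "svars (xmon k) \<subseteq> {i. k i \<noteq> 0}"
  and svars_ymon: "svars (ymon k) \<subseteq> {i. k i \<noteq> 0}"
  by (auto simp: xmon_def ymon_def wvars_def)

lemma foldr_fgen:
  assumes "distinct is"
  shows "foldr smult (map (\<lambda>i. fgen i (k i) (l i)) is) sone
    = (smult (xmon (exp_on k (set is))) (smult (projs is) (ymon (exp_on l (set is))))
        :: word \<Rightarrow> 'k::field)"
  using assms
proof (induction "is")
  case Nil
  then show ?case
    by (simp add: exp_on_def)
next
  case (Cons j "is")
  let ?K = "exp_on k (set is)" and ?L = "exp_on l (set is)"
  let ?a = "exp_at j (k j)" and ?b = "exp_at j (l j)"
  have j: "j \<notin> set is" and "distinct is"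
    using Cons.prems by simp_all
  note IH = Cons.IH[OF this(2)]
  have svars: "svars (xmon ?K :: word \<Rightarrow> 'k) \<subseteq> set is" "svars (projs is :: word \<Rightarrow> 'k) \<subseteq> set is"
      "svars (ymon ?b :: word \<Rightarrow> 'k) \<subseteq> {j}" "svars (proj j :: word \<Rightarrow> 'k) \<subseteq> {j}"
    using svars_xmon[of ?K] svars_ymon[of ?b] svars_projs[of "is"] svars_proj[of j]
    by (auto simp: exp_on_def exp_at_def split: if_splits)
  have c1: "smult (ymon ?b) (xmon ?K) = (smult (xmon ?K) (ymon ?b) :: word \<Rightarrow> 'k)"
    and c2: "smult (ymon ?b) (projs is) = (smult (projs is) (ymon ?b) :: word \<Rightarrow> 'k)"
    and c3: "smult (proj j) (xmon ?K) = (smult (xmon ?K) (proj j) :: word \<Rightarrow> 'k)"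
    using svars j by (auto intro!: smult_commute)
  have "foldr smult (map (\<lambda>i. fgen i (k i) (l i)) (j # is)) sone
      = (smult (xmon ?a) (smult (proj j) (smult (ymon ?b)
          (smult (xmon ?K) (smult (projs is) (ymon ?L))))) :: word \<Rightarrow> 'k)"
    by (simp add: IH) (simp add: fgen_def smult_assoc)
  also have "\<dots> = smult (xmon ?a) (smult (xmon ?K) (smult (proj j)
      (smult (projs is) (smult (ymon ?b) (ymon ?L)))))"
    by (simp add: smult_left_commute[OF _ _ _ c1] smult_left_commute[OF _ _ _ c2]
        smult_left_commute[OF _ _ _ c3])
  also have "\<dots> = smult (xmon (exp_on k (set (j # is))))
      (smult (projs (j # is)) (ymon (exp_on l (set (j # is)))))"
  proof -
    have "(\<lambda>i. ?a i + ?K i) = exp_on k (set (j # is))" "(\<lambda>i. ?b i + ?L i) = exp_on l (set (j # is))"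
      using j by (auto simp: exp_on_def exp_at_def fun_eq_iff)
    then show ?thesis
      by (simp add: xmon_xmon ymon_ymon flip: smult_assoc)
  qed
  finally show ?case .
qed

definition munits :: "nat \<Rightarrow> (word \<Rightarrow> 'k::field) set" where
  "munits n = {munit n k l | k l. k \<in> exps n \<and> l \<in> exps n}"

lemma munit_eq_foldr_fgen:
  assumes "k \<in> exps n" "l \<in> exps n"
  shows "munit n k l = foldr smult (map (\<lambda>i. fgen i (k i) (l i)) [0..<n]) sone"
proof -
  have "exp_on k {0..<n} = k" "exp_on l {0..<n} = l"
    using assms by (auto simp: exp_on_def exps_def fun_eq_iff)
  then show ?thesis
    by (simp add: foldr_fgen munit_def idem_def)
qed

lemma munits_subset_Fn: "(munits n :: (word \<Rightarrow> 'k::field) set) \<subseteq> Fn n"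
proof
  fix x :: "word \<Rightarrow> 'k" assume "x \<in> munits n"
  then obtain k l where kl: "k \<in> exps n" "l \<in> exps n" and x: "x = munit n k l"
    by (auto simp: munits_def)
  have "\<forall>i<n. fgen i (k i) (l i) \<in> (Fi i :: (word \<Rightarrow> 'k) set)"
    by (auto simp: Fi_eq intro: sspan.base)
  moreover have "x = foldr smult (map (\<lambda>i. fgen i (k i) (l i)) [0..<n]) sone"
    using kl x by (simp add: munit_eq_foldr_fgen)
  ultimately show "x \<in> Fn n"
    unfolding Fn_def
    by (intro sspan.base CollectI exI[of _ "\<lambda>i. fgen i (k i) (l i)"] conjI) simp_all
qed

lemma Fn_eq_sspan_munits: "(Fn n :: (word \<Rightarrow> 'k::field) set) = sspan (munits n)"
proof
  show "sspan (munits n) \<subseteq> Fn n"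
    using munits_subset_Fn[of n] unfolding Fn_def by (rule sspan_subset)
  let ?U = "\<lambda>i. {fgen i k l | k l. True}"
  have "(foldr smult (map f [0..<n]) sone :: word \<Rightarrow> 'k) \<in> sspan (munits n)"
    if "\<forall>i<n. f i \<in> Fi i" for f
  proof -
    have "foldr smult (map f [0..<n]) sone \<in> sspan {foldr smult (map g [0..<n]) sone | g. \<forall>i\<in>set [0..<n]. g i \<in> ?U i}"
      using that by (intro foldr_smult_sspan) (auto simp: Fi_eq)
    moreover have "{foldr smult (map g [0..<n]) sone | g. \<forall>i\<in>set [0..<n]. g i \<in> ?U i} \<subseteq> (munits n :: (word \<Rightarrow> 'k) set)"
    proof
      fix y :: "word \<Rightarrow> 'k"
      assume "y \<in> {foldr smult (map g [0..<n]) sone | g. \<forall>i\<in>set [0..<n]. g i \<in> ?U i}"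
      then obtain g where g: "\<forall>i\<in>{0..<n}. \<exists>k l. g i = fgen i k l"
          "y = foldr smult (map g [0..<n]) sone"
        by auto
      then have "\<forall>i. \<exists>kl. i < n \<longrightarrow> g i = fgen i (fst kl) (snd kl)"
        by auto
      from choice[OF this] obtain kl where kl: "\<forall>i<n. g i = fgen i (fst (kl i)) (snd (kl i))"
        by blast
      let ?k = "exp_on (\<lambda>i. fst (kl i)) {0..<n}" and ?l = "exp_on (\<lambda>i. snd (kl i)) {0..<n}"
      have kl_exps: "?k \<in> exps n" "?l \<in> exps n"
        by (auto simp: exps_def exp_on_def)
      have "foldr smult (map g [0..<n]) sone
          = foldr smult (map (\<lambda>i. fgen i (?k i) (?l i)) [0..<n]) sone"
        using kl by (intro arg_cong[where f = "\<lambda>xs. foldr smult xs sone"] map_cong)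
          (auto simp: exp_on_def)
      then have "y = munit n ?k ?l"
        by (simp add: g(2) munit_eq_foldr_fgen[OF kl_exps])
      with kl_exps show "y \<in> munits n"
        unfolding munits_def by blast
    qed
    ultimately show ?thesis
      using sspan_mono by blast
  qed
  then show "(Fn n :: (word \<Rightarrow> 'k) set) \<subseteq> sspan (munits n)"
    unfolding Fn_def by (intro sspan_subset subsetI) auto
qed

lemma munit_in_munits: "k \<in> exps n \<Longrightarrow> l \<in> exps n \<Longrightarrow> munit n k l \<in> munits n"
  unfolding munits_def by blast

lemma munits_subset_Sn: "munits n \<subseteq> Sn n"
  by (auto simp: munits_def)

lemma Fn_subset_Sn: "Fn n \<subseteq> Sn n"
  unfolding Fn_eq_sspan_munits by (rule sspan_Sn[OF munits_subset_Sn])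

lemma finsupp_Fn: "a \<in> Fn n \<Longrightarrow> a \<in> finsupp"
  using Fn_subset_Sn Sn_finsupp by blast

lemma munit_in_Fn: "k \<in> exps n \<Longrightarrow> l \<in> exps n \<Longrightarrow> munit n k l \<in> Fn n"
  using munits_subset_Fn munit_in_munits by blast

lemma smult_Fn_left:
  assumes s: "(s :: word \<Rightarrow> 'k::field) \<in> Sn n" and a: "a \<in> Fn n"
  shows "smult s a \<in> Fn n"
proof -
  let ?P = "{smult u v | u v. u \<in> sbasis ` supp s \<and> v \<in> (munits n :: (word \<Rightarrow> 'k) set)}"
  have "smult s a \<in> sspan ?P"
    using s a munits_subset_Sn Sn_finsupp
    by (intro smult_sspan_sspan finsupp_in_sspan_sbasis) (auto simp: Fn_eq_sspan_munits)
  moreover have "?P \<subseteq> sspan (munits n)"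
  proof
    fix x :: "word \<Rightarrow> 'k" assume "x \<in> ?P"
    then obtain a b k l where w: "(a, b) \<in> supp s" and kl: "k \<in> exps n" "l \<in> exps n"
      and x: "x = smult (sbasis (a, b)) (munit n k l)"
      by (auto simp: munits_def)
    have "(a, b) \<in> words n"
      using s w by (auto simp: Sn_def)
    then have "(\<lambda>i. a i + (k i - b i)) \<in> exps n"
      using kl by (auto simp: words_iff_exps exps_def)
    moreover have "x = (if \<forall>i. b i \<le> k i then munit n (\<lambda>i. a i + (k i - b i)) l else szero)"
      unfolding x using \<open>(a, b) \<in> words n\<close> kl(1) by (rule sbasis_munit)
    ultimately show "x \<in> sspan (munits n)"
      using kl by (auto intro: sspan.zero sspan.base[OF munit_in_munits])
  qed
  ultimately show ?thesis
    unfolding Fn_eq_sspan_munits using sspan_subset by blast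
qed

lemma sflip_Fn: "sflip ` Fn n = (Fn n :: (word \<Rightarrow> 'k::field) set)"
proof -
  have "sflip ` munits n \<subseteq> (munits n :: (word \<Rightarrow> 'k) set)"
  proof
    fix y :: "word \<Rightarrow> 'k" assume "y \<in> sflip ` munits n"
    then obtain k l where "k \<in> exps n" "l \<in> exps n" "y = sflip (munit n k l)"
      by (auto simp: munits_def)
    then show "y \<in> munits n"
      by (simp add: sflip_munit munit_in_munits)
  qed
  then show ?thesis
    by (simp add: Fn_eq_sspan_munits sflip_sspan sflip_image_eq)
qed

lemma sflip_in_Fn_iff [simp]: "sflip a \<in> Fn n \<longleftrightarrow> a \<in> Fn n"
  by (metis image_eqI inj_image_mem_iff inj_sflip sflip_Fn)

lemma smult_Fn_right:
  assumes "s \<in> Sn n" "a \<in> Fn n"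
  shows "smult a s \<in> Fn n"
proof -
  have "smult (sflip s) (sflip a) \<in> Fn n"
    using assms by (intro smult_Fn_left) simp_all
  moreover have "sflip (smult a s) = smult (sflip s) (sflip a)"
    using assms by (intro sflip_smult finsupp_Fn Sn_finsupp)
  ultimately show ?thesis
    by (metis sflip_in_Fn_iff)
qed

lemma szero_in_Fn: "szero \<in> Fn n"
  and sadd_in_Fn: "a \<in> Fn n \<Longrightarrow> b \<in> Fn n \<Longrightarrow> sadd a b \<in> Fn n"
  by (simp_all add: Fn_def sspan.zero sspan.add)

lemma left_ideal_Fn: "left_ideal n (Fn n)"
  unfolding left_ideal_def using Fn_subset_Sn szero_in_Fn sadd_in_Fn smult_Fn_left by blast

lemma right_ideal_Fn: "right_ideal n (Fn n)"
  unfolding right_ideal_def using Fn_subset_Sn szero_in_Fn sadd_in_Fn smult_Fn_right by blast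

lemma ideal_Fn: "ideal n (Fn n)"
  by (simp add: ideal_def left_ideal_Fn right_ideal_Fn)

section \<open>Corners\<close>

lemma smult_sandwich_single:
  assumes "s \<in> finsupp" "f \<in> finsupp" "g \<in> finsupp"
    and "\<And>u. u \<in> supp s \<Longrightarrow> u \<noteq> w \<Longrightarrow> smult f (smult (sbasis u) g) = szero"
  shows "smult f (smult s g) = sscale (s w) (smult f (smult (sbasis w) g))"
proof -
  let ?L = "\<lambda>t. smult f (smult t g)" and ?r = "s(w := 0)"
  have r: "?r \<in> sspan (sbasis ` (supp s - {w}))"
    using assms(1) by (intro sspan_sbasis) (auto simp: finsupp_def supp_fun_upd_zero)
  have "?L ?r \<in> sspan (?L ` sbasis ` (supp s - {w}))"
    by (rule sspan_image_linear[OF r])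
      (use assms(2,3) in \<open>auto simp: smult_sadd_left smult_sadd_right smult_sscale_left
        smult_sscale_right\<close>)
  moreover have "?L ` sbasis ` (supp s - {w}) \<subseteq> {szero}"
    using assms(4) by auto
  ultimately have "?L ?r = szero"
    using sspan_mono sspan_szero by blast
  moreover have "?r \<in> finsupp"
    using assms(1) by (simp add: finsupp_def supp_fun_upd_zero)
  moreover have "s = sadd (sscale (s w) (sbasis w)) ?r"
    by (auto simp: fun_eq_iff sadd_def sscale_def sbasis_def)
  then have "?L s = ?L (sadd (sscale (s w) (sbasis w)) ?r)"
    by (rule arg_cong)
  ultimately show ?thesis
    using assms(2,3) by (simp add: smult_sadd_left smult_sadd_right smult_sscale_left
        smult_sscale_right) (simp add: sadd_def szero_def)
qed

lemma idem_sandwich: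
  assumes "a \<in> Sn n"
  shows "smult (idem n) (smult a (idem n)) = sscale (a (zexp, zexp)) (idem n)"
proof -
  have "smult (idem n) (smult a (idem n))
      = sscale (a (zexp, zexp)) (smult (idem n) (smult (sbasis (zexp, zexp)) (idem n)))"
  proof (rule smult_sandwich_single)
    fix u assume "u \<in> supp a" "u \<noteq> (zexp, zexp)"
    moreover have "u \<in> words n"
      using assms \<open>u \<in> supp a\<close> by (auto simp: Sn_def)
    ultimately show "smult (idem n) (smult (sbasis u) (idem n)) = szero"
      by (simp add: idem_sbasis_idem)
  qed (use assms Sn_finsupp in auto)
  then show ?thesis
    by (simp add: idem_sbasis_idem)
qed

definition corner :: "nat \<Rightarrow> (nat \<Rightarrow> nat) \<Rightarrow> (nat \<Rightarrow> nat) \<Rightarrow> (word \<Rightarrow> 'k::field) \<Rightarrow> (word \<Rightarrow> 'k)"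
  where "corner n p q a = smult (munit n zexp p) (smult a (munit n q zexp))"

lemma corner_eq_idem_sandwich:
  "a \<in> finsupp \<Longrightarrow>
    corner n p q a = smult (idem n) (smult (smult (ymon p) (smult a (xmon q))) (idem n))"
  by (simp add: corner_def munit_def smult_assoc)

lemma corner_eq_sscale_idem:
  assumes "a \<in> Sn n" "p \<in> exps n" "q \<in> exps n"
  shows "corner n p q a = sscale (smult (ymon p) (smult a (xmon q)) (zexp, zexp)) (idem n)"
  using assms by (simp add: corner_eq_idem_sandwich Sn_finsupp idem_sandwich)

lemma corner_sbasis:
  assumes "(k, l) \<in> words n" "p \<in> exps n" "q \<in> exps n"
  shows "corner n p q (sbasis (k, l))
    = (if (\<forall>i. k i \<le> p i) \<and> q = (\<lambda>i. l i + (p i - k i)) then idem n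
       else (szero :: word \<Rightarrow> 'k::field))"
proof -
  let ?w = "wmul (wmul (zexp, p) (k, l)) (q, zexp)"
  have "?w \<in> words n"
    using assms by (intro wmul_words) (auto simp: words_iff_exps)
  moreover have "?w = (zexp, zexp) \<longleftrightarrow> (\<forall>i. k i \<le> p i) \<and> q = (\<lambda>i. l i + (p i - k i))"
    by (auto simp: wmul_def fun_eq_iff intro: antisym)
  moreover have "smult (ymon p) (smult (sbasis (k, l)) (xmon q)) = (sbasis ?w :: word \<Rightarrow> 'k)"
    by (simp add: xmon_def ymon_def smult_sbasis wmul_assoc)
  ultimately show ?thesis
    by (simp add: corner_eq_idem_sandwich idem_sbasis_idem)
qed

lemma eq_if_le_and_sum_le:
  assumes "k \<in> exps n" "p \<in> exps n" "\<forall>i. k i \<le> p i" "(\<Sum>i<n. p i) \<le> (\<Sum>i<n. k i)"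
  shows "k = p"
proof (rule ccontr)
  assume "k \<noteq> p"
  then obtain j where j: "k j \<noteq> p j"
    by auto
  then have "j < n"
    using assms(1,2) by (auto simp: exps_def intro: ccontr)
  then have "(\<Sum>i<n. k i) < (\<Sum>i<n. p i)"
    using assms(3) j by (intro sum_strict_mono_ex1) (auto simp: le_less)
  then show False
    using assms(4) by simp
qed

text \<open>A word \<open>x\<^sup>k y\<^sup>l\<close> of the support of \<open>a\<close> contributes to \<open>corner n p q a\<close> only if \<open>k \<le> p\<close>
  and \<open>q = l + (p - k)\<close>; minimality of \<open>\<Sum>i<n. p i\<close> leaves only the word \<open>(p, q)\<close>.\<close>

lemma corner_minimal_support:
  assumes a: "a \<in> Sn n" and pq: "(p, q) \<in> supp a"
    and min: "\<And>k l. (k, l) \<in> supp a \<Longrightarrow> (\<Sum>i<n. p i) \<le> (\<Sum>i<n. k i)"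
  shows "corner n p q a = sscale (a (p, q)) (idem n)"
proof -
  have supp_words: "supp a \<subseteq> words n"
    using a by (simp add: Sn_def)
  then have pq_exps: "p \<in> exps n" "q \<in> exps n"
    using pq by (auto simp: words_iff_exps)
  have "corner n p q a = sscale (a (p, q)) (corner n p q (sbasis (p, q)))"
    unfolding corner_def
  proof (rule smult_sandwich_single)
    fix u assume u: "u \<in> supp a" "u \<noteq> (p, q)"
    obtain k l where kl: "u = (k, l)"
      by fastforce
    have klw: "(k, l) \<in> words n"
      using u(1) kl supp_words by auto
    have not_le: "\<not> ((\<forall>i. k i \<le> p i) \<and> q = (\<lambda>i. l i + (p i - k i)))"
    proof
      assume le: "(\<forall>i. k i \<le> p i) \<and> q = (\<lambda>i. l i + (p i - k i))"
      have "k = p"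
        using u(1) kl supp_words le min[of k l] pq_exps
        by (intro eq_if_le_and_sum_le[of k n]) (auto simp: words_iff_exps)
      with le have "l = q"
        by (simp add: fun_eq_iff)
      with \<open>k = p\<close> u(2) kl show False
        by simp
    qed
    show "smult (munit n zexp p) (smult (sbasis u) (munit n q zexp)) = szero"
      using corner_sbasis[OF klw pq_exps] not_le kl by (simp add: corner_def)
  qed (use a Sn_finsupp in auto)
  also have "corner n p q (sbasis (p, q)) = idem n"
    using pq pq_exps supp_words by (auto simp: corner_sbasis)
  finally show ?thesis .
qed

lemma exists_corner_eq_sscale_coeff:
  assumes "a \<in> Sn n" "a \<noteq> szero"
  obtains p q where "p \<in> exps n" "q \<in> exps n" "a (p, q) \<noteq> 0"
    "corner n p q a = sscale (a (p, q)) (idem n)"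
proof -
  obtain w1 where "w1 \<in> supp a"
    using assms(2) by (auto simp: supp_def szero_def fun_eq_iff)
  then obtain w where w: "w \<in> supp a" "\<And>v. v \<in> supp a \<Longrightarrow> (\<Sum>i<n. fst w i) \<le> (\<Sum>i<n. fst v i)"
    using ex_has_least_nat[of "\<lambda>v. v \<in> supp a" w1 "\<lambda>v. \<Sum>i<n. fst v i"] by blast
  obtain p q where pq: "w = (p, q)"
    by fastforce
  have "p \<in> exps n" "q \<in> exps n"
    using assms(1) w(1) pq by (auto simp: Sn_def words_iff_exps)
  moreover have "corner n p q a = sscale (a (p, q)) (idem n)"
    using assms(1) w pq by (intro corner_minimal_support) fastforce+
  ultimately show ?thesis
    using that w(1) pq by (auto simp: supp_def)
qed

lemma exists_corner_neq_szero:
  assumes "a \<in> Sn n" "a \<noteq> szero"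
  obtains p q where "p \<in> exps n" "q \<in> exps n" "corner n p q a \<noteq> szero"
proof -
  obtain p q where pq: "p \<in> exps n" "q \<in> exps n" "a (p, q) \<noteq> 0"
    "corner n p q a = sscale (a (p, q)) (idem n)"
    using exists_corner_eq_sscale_coeff[OF assms] .
  moreover have "corner n p q a \<noteq> szero"
    using pq(3,4) idem_neq_szero by (simp add: sscale_eq_szero_iff)
  ultimately show ?thesis
    using that by blast
qed

lemma Fn_faithful:
  assumes "a \<in> Sn n" "a \<noteq> szero"
  shows "\<exists>f \<in> Fn n. smult f a \<noteq> szero" and "\<exists>f \<in> Fn n. smult a f \<noteq> szero"
proof -
  obtain p q where pq: "p \<in> exps n" "q \<in> exps n" "corner n p q a \<noteq> szero"
    using exists_corner_neq_szero[OF assms] .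
  then have "smult (smult (munit n zexp p) a) (munit n q zexp) \<noteq> szero"
    using assms(1) by (simp add: corner_def smult_assoc Sn_finsupp)
  then have "smult (munit n zexp p) a \<noteq> szero"
    by auto
  then show "\<exists>f \<in> Fn n. smult f a \<noteq> szero"
    using pq(1) by (intro bexI[of _ "munit n zexp p"]) (simp_all add: munit_in_Fn)
  have "smult a (munit n q zexp) \<noteq> szero"
    using pq(3) by (auto simp: corner_def)
  then show "\<exists>f \<in> Fn n. smult a f \<noteq> szero"
    using pq(2) by (intro bexI[of _ "munit n q zexp"]) (simp_all add: munit_in_Fn)
qed

section \<open>Ideals\<close>

lemma left_ideal_neq_szero_obtain:
  assumes "left_ideal n N" "N \<noteq> {szero}"
  obtains a where "a \<in> N" "a \<noteq> szero" "a \<in> Sn n"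
  using assms by (auto simp: left_ideal_def)

lemma right_ideal_neq_szero_obtain:
  assumes "right_ideal n N" "N \<noteq> {szero}"
  obtains a where "a \<in> N" "a \<noteq> szero" "a \<in> Sn n"
  using assms by (auto simp: right_ideal_def)

lemma left_ideal_Int: "left_ideal n M \<Longrightarrow> left_ideal n N \<Longrightarrow> left_ideal n (M \<inter> N)"
  by (auto simp: left_ideal_def)

lemma right_ideal_Int: "right_ideal n M \<Longrightarrow> right_ideal n N \<Longrightarrow> right_ideal n (M \<inter> N)"
  by (auto simp: right_ideal_def)

lemma left_ideal_sscale:
  assumes "left_ideal n I" "x \<in> I"
  shows "sscale c x \<in> I"
proof -
  have "x \<in> finsupp"
    using assms by (auto simp: left_ideal_def intro: Sn_finsupp)
  then have "sscale c x = smult (sscale c sone) x"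
    by (simp add: smult_sscale_left)
  then show ?thesis
    using assms by (auto simp: left_ideal_def)
qed

lemma left_ideal_sspan: "left_ideal n I \<Longrightarrow> A \<subseteq> I \<Longrightarrow> sspan A \<subseteq> I"
  by (auto elim!: sspan_subset_closed intro: left_ideal_sscale simp: left_ideal_def)

lemma ideal_neq_szero_obtain:
  assumes "ideal n I" "I \<noteq> {szero}"
  obtains a where "a \<in> I" "a \<noteq> szero"
  using assms by (auto simp: ideal_def left_ideal_def)

lemma idem_in_ideal:
  assumes I: "ideal n I" and a: "a \<in> I" "a \<noteq> szero"
  shows "idem n \<in> I"
proof -
  have "a \<in> Sn n"
    using I a by (auto simp: ideal_def left_ideal_def)
  then obtain p q where pq: "p \<in> exps n" "q \<in> exps n" "a (p, q) \<noteq> 0"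
      "corner n p q a = sscale (a (p, q)) (idem n)"
    using exists_corner_eq_sscale_coeff a(2) by blast
  have "smult a (munit n q zexp) \<in> I"
    using I a pq by (auto simp: ideal_def right_ideal_def)
  then have "corner n p q a \<in> I"
    using I pq(1) by (auto simp: corner_def ideal_def left_ideal_def)
  then have "sscale (inverse (a (p, q))) (corner n p q a) \<in> I"
    using I by (auto simp: ideal_def intro: left_ideal_sscale)
  then show ?thesis
    using pq(3,4) by simp
qed

lemma munit_factor_idem:
  assumes "k \<in> exps n" "l \<in> exps n"
  shows "munit n k l = (smult (munit n k zexp) (smult (idem n) (munit n zexp l)) :: word \<Rightarrow> 'k::field)"
proof -
  have "(idem n :: word \<Rightarrow> 'k) = munit n zexp zexp"
    by (simp add: munit_def)
  then show ?thesis
    using assms by (simp add: munit_mult)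
qed

lemma Fn_subset_ideal:
  assumes I: "ideal n (I :: (word \<Rightarrow> 'k::field) set)" "I \<noteq> {szero}"
  shows "Fn n \<subseteq> I"
proof -
  obtain a where "a \<in> I" "a \<noteq> szero"
    using ideal_neq_szero_obtain[OF I] .
  with I(1) have E: "idem n \<in> I"
    by (intro idem_in_ideal)
  have "munits n \<subseteq> I"
  proof
    fix x :: "word \<Rightarrow> 'k" assume "x \<in> munits n"
    then obtain k l where kl: "k \<in> exps n" "l \<in> exps n" "x = munit n k l"
      by (auto simp: munits_def)
    have "smult (idem n) (munit n zexp l) \<in> I"
      using I E kl by (auto simp: ideal_def right_ideal_def)
    then have "smult (munit n k zexp) (smult (idem n) (munit n zexp l)) \<in> I"
      using I kl by (auto simp: ideal_def left_ideal_def)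
    then show "x \<in> I"
      unfolding kl(3) by (subst munit_factor_idem[OF kl(1,2)])
  qed
  moreover have "left_ideal n I"
    using I(1) by (simp add: ideal_def)
  ultimately show ?thesis
    unfolding Fn_eq_sspan_munits by (intro left_ideal_sspan)
qed

lemma setprod_Fn_Fn: "setprod (Fn n) (Fn n) = (Fn n :: (word \<Rightarrow> 'k::field) set)"
proof
  have "{smult a b | a b. a \<in> Fn n \<and> b \<in> Fn n} \<subseteq> (Fn n :: (word \<Rightarrow> 'k) set)"
  proof
    fix x :: "word \<Rightarrow> 'k" assume "x \<in> {smult a b | a b. a \<in> Fn n \<and> b \<in> Fn n}"
    then obtain a b where "a \<in> Fn n" "b \<in> Fn n" "x = smult a b"
      by blast
    then show "x \<in> Fn n"
      using Fn_subset_Sn smult_Fn_right by blast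
  qed
  then show "setprod (Fn n) (Fn n) \<subseteq> (Fn n :: (word \<Rightarrow> 'k) set)"
    unfolding setprod_def by (rule left_ideal_sspan[OF left_ideal_Fn])
  have "munits n \<subseteq> {smult a b | a b. a \<in> Fn n \<and> b \<in> (Fn n :: (word \<Rightarrow> 'k) set)}"
  proof
    fix x :: "word \<Rightarrow> 'k" assume "x \<in> munits n"
    then obtain k l where kl: "k \<in> exps n" "l \<in> exps n" "x = munit n k l"
      by (auto simp: munits_def)
    then have "x = smult (munit n k zexp) (munit n zexp l)"
      by (simp add: munit_mult)
    moreover have "munit n k zexp \<in> Fn n" "munit n zexp l \<in> Fn n"
      using kl by (simp_all add: munit_in_Fn)
    ultimately show "x \<in> {smult a b | a b. a \<in> Fn n \<and> b \<in> Fn n}"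
      by blast
  qed
  then show "(Fn n :: (word \<Rightarrow> 'k) set) \<subseteq> setprod (Fn n) (Fn n)"
    unfolding setprod_def Fn_eq_sspan_munits[of n] by (rule sspan_mono)
qed

lemma essential_left_Fn: "essential_left n (Fn n)"
  unfolding essential_left_def
proof (intro conjI allI impI)
  show "left_ideal n (Fn n)"
    by (rule left_ideal_Fn)
  fix N assume N: "left_ideal n N \<and> N \<noteq> {szero}"
  then obtain a where a: "a \<in> N" "a \<noteq> szero" "a \<in> Sn n"
    using left_ideal_neq_szero_obtain by blast
  then obtain f where f: "f \<in> Fn n" "smult f a \<noteq> szero"
    using Fn_faithful(1) by blast
  moreover have "f \<in> Sn n"
    using f(1) Fn_subset_Sn by blast
  ultimately have "smult f a \<in> Fn n \<inter> N"
    using N a smult_Fn_right by (auto simp: left_ideal_def)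
  with f(2) show "Fn n \<inter> N \<noteq> {szero}"
    by (metis singletonD)
qed

lemma essential_right_Fn: "essential_right n (Fn n)"
  unfolding essential_right_def
proof (intro conjI allI impI)
  show "right_ideal n (Fn n)"
    by (rule right_ideal_Fn)
  fix N assume N: "right_ideal n N \<and> N \<noteq> {szero}"
  then obtain a where a: "a \<in> N" "a \<noteq> szero" "a \<in> Sn n"
    using right_ideal_neq_szero_obtain by blast
  then obtain f where f: "f \<in> Fn n" "smult a f \<noteq> szero"
    using Fn_faithful(2) by blast
  moreover have "f \<in> Sn n"
    using f(1) Fn_subset_Sn by blast
  ultimately have "smult a f \<in> Fn n \<inter> N"
    using N a smult_Fn_left by (auto simp: right_ideal_def)
  with f(2) show "Fn n \<inter> N \<noteq> {szero}"
    by (metis singletonD)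
qed

lemma essential_left_mono:
  assumes "essential_left n (M :: (word \<Rightarrow> 'k::field) set)" "left_ideal n M'" "M \<subseteq> M'"
  shows "essential_left n M'"
  unfolding essential_left_def
proof (intro conjI allI impI)
  fix N :: "(word \<Rightarrow> 'k) set" assume N: "left_ideal n N \<and> N \<noteq> {szero}"
  then have "M \<inter> N \<noteq> {szero}"
    using assms(1) by (simp add: essential_left_def)
  moreover have "szero \<in> M \<inter> N"
    using assms(1) N by (simp add: essential_left_def left_ideal_def)
  ultimately obtain x where "x \<in> M \<inter> N" "x \<noteq> szero"
    by blast
  with assms(3) show "M' \<inter> N \<noteq> {szero}"
    by blast
qed (rule assms(2))

lemma essential_right_mono:
  assumes "essential_right n (M :: (word \<Rightarrow> 'k::field) set)" "right_ideal n M'" "M \<subseteq> M'"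
  shows "essential_right n M'"
  unfolding essential_right_def
proof (intro conjI allI impI)
  fix N :: "(word \<Rightarrow> 'k) set" assume N: "right_ideal n N \<and> N \<noteq> {szero}"
  then have "M \<inter> N \<noteq> {szero}"
    using assms(1) by (simp add: essential_right_def)
  moreover have "szero \<in> M \<inter> N"
    using assms(1) N by (simp add: essential_right_def right_ideal_def)
  ultimately obtain x where "x \<in> M \<inter> N" "x \<noteq> szero"
    by blast
  with assms(3) show "M' \<inter> N \<noteq> {szero}"
    by blast
qed (rule assms(2))

lemma essential_ideal:
  assumes "ideal n (I :: (word \<Rightarrow> 'k::field) set)" "I \<noteq> {szero}"
  shows "essential_left n I \<and> essential_right n I"
proof -
  have "Fn n \<subseteq> I"
    using assms by (rule Fn_subset_ideal)
  with assms(1) show ?thesis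
    by (auto simp: ideal_def intro: essential_left_mono[OF essential_left_Fn]
        essential_right_mono[OF essential_right_Fn])
qed

lemma prime_alg: "prime_alg n TYPE('k::field)"
  unfolding prime_alg_def
proof (intro allI impI)
  fix I J :: "(word \<Rightarrow> 'k) set"
  assume IJ: "ideal n I \<and> ideal n J \<and> setprod I J = {szero}"
  show "I = {szero} \<or> J = {szero}"
  proof (rule ccontr)
    assume "\<not> (I = {szero} \<or> J = {szero})"
    then have "idem n \<in> I" "idem n \<in> J"
      using Fn_subset_ideal[of n I] Fn_subset_ideal[of n J] IJ munit_in_Fn[of zexp n zexp]
      by (auto simp: munit_def)
    then have "smult (idem n) (idem n) \<in> setprod I J"
      unfolding setprod_def by (auto intro: sspan.base)
    then show False
      using IJ idem_neq_szero[where 'k = 'k] by (simp add: idem_idem)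
  qed
qed

lemma Fn_neq_szero: "Fn n \<noteq> {szero :: word \<Rightarrow> 'k::field}"
  using munit_in_Fn[of zexp n zexp] idem_neq_szero[where 'k = 'k] by (auto simp: munit_def)

lemma simple_bimod_Fn: "simple_bimod n (Fn n)"
  unfolding simple_bimod_def using ideal_Fn Fn_neq_szero Fn_subset_ideal by blast

section \<open>Socles\<close>

lemma sspan_Fn: "sspan (Fn n) = Fn n"
  using left_ideal_sspan[OF left_ideal_Fn order.refl] by (auto intro: sspan.base)

lemma soc_bimod_Fn: "soc_bimod n = (Fn n :: (word \<Rightarrow> 'k::field) set)"
proof -
  have "simple_bimod n M \<longleftrightarrow> M = Fn n" for M :: "(word \<Rightarrow> 'k) set"
  proof
    assume M: "simple_bimod n M"
    then have "Fn n \<subseteq> M"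
      by (intro Fn_subset_ideal) (auto simp: simple_bimod_def)
    then show "M = Fn n"
      using M ideal_Fn[of n] Fn_neq_szero[of n] unfolding simple_bimod_def by blast
  qed (simp add: simple_bimod_Fn)
  then show ?thesis
    by (simp add: soc_bimod_def sspan_Fn)
qed

lemma simple_left_subset_Fn:
  assumes "simple_left n (M :: (word \<Rightarrow> 'k::field) set)"
  shows "M \<subseteq> Fn n"
proof -
  have M: "left_ideal n M" "M \<noteq> {szero}"
    using assms by (simp_all add: simple_left_def)
  then have "Fn n \<inter> M \<noteq> {szero}"
    using essential_left_Fn[of n] unfolding essential_left_def by blast
  moreover have "left_ideal n (Fn n \<inter> M)"
    using M(1) left_ideal_Fn by (rule left_ideal_Int[rotated])
  ultimately have "Fn n \<inter> M = M"
    using assms by (auto simp: simple_left_def)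
  then show ?thesis
    by blast
qed

definition col :: "nat \<Rightarrow> (nat \<Rightarrow> nat) \<Rightarrow> (word \<Rightarrow> 'k::field) set" where
  "col n l = {smult s (munit n zexp l) | s. s \<in> Sn n}"

lemma left_ideal_col:
  assumes "l \<in> exps n"
  shows "left_ideal n (col n l :: (word \<Rightarrow> 'k::field) set)"
  unfolding left_ideal_def
proof (intro conjI ballI subsetI)
  show "x \<in> Sn n" if "x \<in> col n l" for x :: "word \<Rightarrow> 'k"
    using that assms by (auto simp: col_def)
  show "szero \<in> (col n l :: (word \<Rightarrow> 'k) set)"
    unfolding col_def by (rule CollectI, rule exI[of _ szero]) simp
  show "sadd a b \<in> col n l" if ab: "a \<in> col n l" "b \<in> col n l" for a b :: "word \<Rightarrow> 'k"
  proof -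
    obtain s t where "s \<in> Sn n" "t \<in> Sn n" "a = smult s (munit n zexp l)" "b = smult t (munit n zexp l)"
      using ab by (auto simp: col_def)
    then show ?thesis
      unfolding col_def by (intro CollectI exI[of _ "sadd s t"]) (simp add: smult_sadd_left Sn_finsupp)
  qed
  show "smult r a \<in> col n l" if ra: "r \<in> Sn n" "a \<in> col n l" for r a :: "word \<Rightarrow> 'k"
  proof -
    obtain s where "s \<in> Sn n" "a = smult s (munit n zexp l)"
      using ra by (auto simp: col_def)
    then show ?thesis
      using ra unfolding col_def
      by (intro CollectI exI[of _ "smult r s"]) (simp add: smult_assoc Sn_finsupp)
  qed
qed

lemma munit_in_col: "k \<in> exps n \<Longrightarrow> l \<in> exps n \<Longrightarrow> munit n k l \<in> col n l"
  unfolding col_def by (intro CollectI exI[of _ "munit n k zexp"]) (simp add: munit_mult)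

lemma simple_left_col:
  assumes l: "l \<in> exps n"
  shows "simple_left n (col n l :: (word \<Rightarrow> 'k::field) set)"
  unfolding simple_left_def
proof (intro conjI allI impI)
  show "left_ideal n (col n l :: (word \<Rightarrow> 'k) set)"
    using l by (rule left_ideal_col)
  have "munit n zexp l \<in> (col n l :: (word \<Rightarrow> 'k) set)"
    using l by (simp add: munit_in_col)
  moreover have "munit n zexp l \<noteq> (szero :: word \<Rightarrow> 'k)"
  proof
    assume "munit n zexp l = (szero :: word \<Rightarrow> 'k)"
    moreover have "smult (munit n zexp l) (munit n l zexp) = (idem n :: word \<Rightarrow> 'k)"
      using munit_mult[OF l l, of zexp zexp] by (simp add: munit_zexp_zexp)
    ultimately show False
      using idem_neq_szero[of n, where 'k = 'k] by simp
  qed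
  ultimately show "col n l \<noteq> {szero :: word \<Rightarrow> 'k}"
    by blast
  fix N :: "(word \<Rightarrow> 'k) set" assume N: "left_ideal n N \<and> N \<subseteq> col n l"
  show "N = {szero} \<or> N = col n l"
  proof (cases "N = {szero}")
    case False
    with N obtain b where b: "b \<in> N" "b \<noteq> szero" "b \<in> Sn n"
      using left_ideal_neq_szero_obtain by blast
    then obtain s where s: "s \<in> Sn n" "b = smult s (munit n zexp l)"
      using N by (auto simp: col_def)
    obtain p q where pq: "p \<in> exps n" "q \<in> exps n" "corner n p q b \<noteq> szero"
      using exists_corner_neq_szero[OF b(3,2)] .
    have "smult (munit n zexp p) b = smult (corner n p zexp s) (munit n zexp l)"
      using s l by (simp add: corner_def smult_assoc munit_mult Sn_finsupp)
    also obtain c where "corner n p zexp s = sscale c (idem n)"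
      using corner_eq_sscale_idem[OF s(1) pq(1) exps_zexp] by blast
    also have "smult (sscale c (idem n)) (munit n zexp l) = sscale c (munit n zexp l)"
      using l by (simp add: smult_sscale_left munit_mult flip: munit_zexp_zexp)
    finally have cb: "smult (munit n zexp p) b = sscale c (munit n zexp l)" .
    have "c \<noteq> 0"
    proof
      assume "c = 0"
      then have "smult (munit n zexp p) b = szero"
        by (simp add: cb sscale_def szero_def)
      then show False
        using pq(3) b(3) by (simp add: corner_def Sn_finsupp flip: smult_assoc)
    qed
    have "smult (munit n zexp p) b \<in> N"
      using N b pq by (auto simp: left_ideal_def)
    then have "sscale (inverse c) (smult (munit n zexp p) b) \<in> N"
      using N left_ideal_sscale by blast
    then have "munit n zexp l \<in> N"
      using cb \<open>c \<noteq> 0\<close> by simp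
    then have "col n l \<subseteq> N"
      using N by (auto simp: col_def left_ideal_def)
    with N show ?thesis
      by blast
  qed simp
qed

lemma soc_left_Fn: "soc_left n = (Fn n :: (word \<Rightarrow> 'k::field) set)"
proof
  have "\<Union>{M. simple_left n M} \<subseteq> (Fn n :: (word \<Rightarrow> 'k) set)"
    using simple_left_subset_Fn by blast
  then show "soc_left n \<subseteq> (Fn n :: (word \<Rightarrow> 'k) set)"
    unfolding soc_left_def by (rule left_ideal_sspan[OF left_ideal_Fn])
  have "munits n \<subseteq> \<Union>{M. simple_left n (M :: (word \<Rightarrow> 'k) set)}"
    using munit_in_col simple_left_col by (fastforce simp: munits_def)
  then show "(Fn n :: (word \<Rightarrow> 'k) set) \<subseteq> soc_left n"
    unfolding soc_left_def Fn_eq_sspan_munits by (rule sspan_mono)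
qed

lemma left_ideal_sflip_image:
  assumes "right_ideal n (I :: (word \<Rightarrow> 'k::field) set)"
  shows "left_ideal n (sflip ` I)"
  unfolding left_ideal_def
proof (intro conjI ballI subsetI)
  have I: "I \<subseteq> Sn n" "szero \<in> I" "\<And>a b. a \<in> I \<Longrightarrow> b \<in> I \<Longrightarrow> sadd a b \<in> I"
      "\<And>s a. s \<in> Sn n \<Longrightarrow> a \<in> I \<Longrightarrow> smult a s \<in> I"
    using assms by (auto simp: right_ideal_def)
  show "x \<in> Sn n" if "x \<in> sflip ` I" for x
    using that I(1) by auto
  show "szero \<in> sflip ` I"
    using I(2) by (metis image_eqI sflip_szero)
  show "sadd x y \<in> sflip ` I" if "x \<in> sflip ` I" "y \<in> sflip ` I" for x y
    using that I(3) by (auto simp flip: sflip_sadd)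
  show "smult s x \<in> sflip ` I" if sx: "s \<in> Sn n" "x \<in> sflip ` I" for s x
  proof -
    obtain a where a: "a \<in> I" "x = sflip a"
      using sx(2) by blast
    moreover have "a \<in> finsupp" "s \<in> finsupp"
      using a(1) I(1) sx(1) by (auto intro: Sn_finsupp)
    ultimately have "smult s x = sflip (smult a (sflip s))"
      by (simp add: sflip_smult)
    then show ?thesis
      using I(4) a sx(1) by simp
  qed
qed

lemma right_ideal_sflip_image:
  assumes "left_ideal n (I :: (word \<Rightarrow> 'k::field) set)"
  shows "right_ideal n (sflip ` I)"
  unfolding right_ideal_def
proof (intro conjI ballI subsetI)
  have I: "I \<subseteq> Sn n" "szero \<in> I" "\<And>a b. a \<in> I \<Longrightarrow> b \<in> I \<Longrightarrow> sadd a b \<in> I"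
      "\<And>s a. s \<in> Sn n \<Longrightarrow> a \<in> I \<Longrightarrow> smult s a \<in> I"
    using assms by (auto simp: left_ideal_def)
  show "x \<in> Sn n" if "x \<in> sflip ` I" for x
    using that I(1) by auto
  show "szero \<in> sflip ` I"
    using I(2) by (metis image_eqI sflip_szero)
  show "sadd x y \<in> sflip ` I" if "x \<in> sflip ` I" "y \<in> sflip ` I" for x y
    using that I(3) by (auto simp flip: sflip_sadd)
  show "smult x s \<in> sflip ` I" if sx: "s \<in> Sn n" "x \<in> sflip ` I" for s x
  proof -
    obtain a where a: "a \<in> I" "x = sflip a"
      using sx(2) by blast
    moreover have "a \<in> finsupp" "s \<in> finsupp"
      using a(1) I(1) sx(1) by (auto intro: Sn_finsupp)
    ultimately have "smult x s = sflip (smult (sflip s) a)"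
      by (simp add: sflip_smult)
    then show ?thesis
      using I(4) a sx(1) by simp
  qed
qed

lemma simple_right_sflip_image:
  assumes "simple_left n (L :: (word \<Rightarrow> 'k::field) set)"
  shows "simple_right n (sflip ` L)"
  unfolding simple_right_def
proof (intro conjI allI impI)
  show "right_ideal n (sflip ` L)"
    using assms by (intro right_ideal_sflip_image) (simp add: simple_left_def)
  show "sflip ` L \<noteq> {szero}"
    using assms by (simp add: simple_left_def)
  fix N assume N: "right_ideal n N \<and> N \<subseteq> sflip ` L"
  then have "left_ideal n (sflip ` N)" "sflip ` N \<subseteq> L"
    using left_ideal_sflip_image by (blast, force)
  then have "sflip ` N = {szero} \<or> sflip ` N = L"
    using assms unfolding simple_left_def by blast
  then show "N = {szero} \<or> N = sflip ` L"
    by (metis sflip_image_eq_szero_iff sflip_image_sflip_image)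
qed

lemma simple_right_subset_Fn:
  assumes "simple_right n (M :: (word \<Rightarrow> 'k::field) set)"
  shows "M \<subseteq> Fn n"
proof -
  have M: "right_ideal n M" "M \<noteq> {szero}"
    using assms by (simp_all add: simple_right_def)
  then have "Fn n \<inter> M \<noteq> {szero}"
    using essential_right_Fn[of n] unfolding essential_right_def by blast
  moreover have "right_ideal n (Fn n \<inter> M)"
    using M(1) right_ideal_Fn by (rule right_ideal_Int[rotated])
  ultimately have "Fn n \<inter> M = M"
    using assms by (auto simp: simple_right_def)
  then show ?thesis
    by blast
qed

lemma soc_right_Fn: "soc_right n = (Fn n :: (word \<Rightarrow> 'k::field) set)"
proof
  have "\<Union>{M. simple_right n M} \<subseteq> (Fn n :: (word \<Rightarrow> 'k) set)"
    using simple_right_subset_Fn by blast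
  then show "soc_right n \<subseteq> (Fn n :: (word \<Rightarrow> 'k) set)"
    unfolding soc_right_def by (rule left_ideal_sspan[OF left_ideal_Fn])
  have "munit n k l \<in> \<Union>{M. simple_right n (M :: (word \<Rightarrow> 'k) set)}"
    if "k \<in> exps n" "l \<in> exps n" for k l
  proof -
    have "munit n k l \<in> sflip ` col n k"
      using that munit_in_col[of l n k] by (metis image_eqI sflip_munit)
    moreover have "simple_right n (sflip ` col n k :: (word \<Rightarrow> 'k) set)"
      using that(1) by (intro simple_right_sflip_image simple_left_col)
    ultimately show ?thesis
      by blast
  qed
  then have "munits n \<subseteq> \<Union>{M. simple_right n (M :: (word \<Rightarrow> 'k) set)}"
    by (auto simp: munits_def)
  then show "(Fn n :: (word \<Rightarrow> 'k) set) \<subseteq> soc_right n"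
    unfolding soc_right_def Fn_eq_sspan_munits by (rule sspan_mono)
qed

section \<open>The centre\<close>

lemma smult_sscale_sone_left: "b \<in> finsupp \<Longrightarrow> smult (sscale c sone) b = sscale c b"
  and smult_sscale_sone_right: "b \<in> finsupp \<Longrightarrow> smult b (sscale c sone) = sscale c b"
  by (simp_all add: smult_sscale_left smult_sscale_right)

lemma central_eq_szero:
  assumes b: "b \<in> Sn n" "\<And>x. x \<in> Sn n \<Longrightarrow> smult b x = smult x b" and b0: "b (zexp, zexp) = 0"
  shows "b = szero"
proof (rule ccontr)
  assume "b \<noteq> szero"
  then obtain p q where pq: "p \<in> exps n" "q \<in> exps n" "corner n p q b \<noteq> szero"
    using exists_corner_neq_szero[OF b(1)] by blast
  have "smult (idem n) b = smult (idem n) (smult (idem n) b)"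
    using b(1) by (simp add: idem_idem Sn_finsupp flip: smult_assoc)
  also have "\<dots> = smult (idem n) (smult b (idem n))"
    using b(2)[of "idem n"] by simp
  also have "\<dots> = szero"
    using b(1) b0 by (simp add: idem_sandwich sscale_def szero_def)
  finally have idem_b: "smult (idem n) b = szero" .
  have "corner n p q b = smult (idem n) (smult (ymon p) (smult b (munit n q zexp)))"
    using b(1) by (simp add: corner_def munit_def smult_assoc Sn_finsupp)
  also have "\<dots> = smult (idem n) (smult (smult (ymon p) b) (munit n q zexp))"
    using b(1) by (simp add: smult_assoc Sn_finsupp)
  also have "\<dots> = smult (idem n) (smult (smult b (ymon p)) (munit n q zexp))"
    using b(2)[of "ymon p"] pq(1) by simp
  also have "\<dots> = smult (smult (idem n) b) (smult (ymon p) (munit n q zexp))"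
    using b(1) by (simp add: smult_assoc Sn_finsupp)
  finally show False
    using pq(3) idem_b by simp
qed

lemma centre_eq_scalars: "centre n = range (\<lambda>c::'k::field. sscale c sone)"
proof
  show "range (\<lambda>c::'k. sscale c sone) \<subseteq> centre n"
    by (auto simp: centre_def smult_sscale_sone_left smult_sscale_sone_right Sn_finsupp)
  show "centre n \<subseteq> range (\<lambda>c::'k. sscale c sone)"
  proof
    fix a :: "word \<Rightarrow> 'k" assume "a \<in> centre n"
    then have a: "a \<in> Sn n" "\<And>x. x \<in> Sn n \<Longrightarrow> smult a x = smult x a"
      by (auto simp: centre_def)
    let ?b = "ssub a (sscale (a (zexp, zexp)) sone)"
    have "?b = szero"
    proof (rule central_eq_szero)
      show "?b \<in> Sn n"
        using a(1) by simp
      show "smult ?b x = smult x ?b" if x: "x \<in> Sn n" for x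
      proof -
        have "smult ?b x = ssub (smult a x) (sscale (a (zexp, zexp)) x)"
          using a(1) x by (simp add: smult_ssub_left smult_sscale_sone_left Sn_finsupp)
        also have "\<dots> = ssub (smult x a) (sscale (a (zexp, zexp)) x)"
          using a(2)[OF x] by simp
        also have "\<dots> = smult x ?b"
          using a(1) x by (simp add: smult_ssub_right smult_sscale_sone_right Sn_finsupp)
        finally show ?thesis .
      qed
      show "?b (zexp, zexp) = 0"
        by (simp add: ssub_def sscale_def sone_eq_sbasis sbasis_def)
    qed
    then have "a w = sscale (a (zexp, zexp)) sone w" for w
      by (metis ssub_def szero_def eq_iff_diff_eq_0)
    then have "a = sscale (a (zexp, zexp)) sone"
      by blast
    then show "a \<in> range (\<lambda>c. sscale c sone)"
      by blast
  qed
qed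

theorem proposition4p1:
  fixes n :: nat
  assumes "n \<ge> 1"
  shows "(centre n = range (\<lambda>c::'k::field. sscale c sone))
    \<and> (\<forall>a \<in> Sn n. a \<noteq> (szero :: word \<Rightarrow> 'k::field) \<longrightarrow>
           (\<exists>f \<in> Fn n. smult f a \<noteq> szero) \<and> (\<exists>f \<in> Fn n. smult a f \<noteq> szero))
    \<and> (ideal n (Fn n :: (word \<Rightarrow> 'k::field) set) \<and> Fn n \<noteq> {szero}
         \<and> (\<forall>I :: (word \<Rightarrow> 'k) set. ideal n I \<and> I \<noteq> {szero} \<longrightarrow> Fn n \<subseteq> I))
    \<and> (setprod (Fn n) (Fn n) = (Fn n :: (word \<Rightarrow> 'k::field) set))
    \<and> (essential_left n (Fn n :: (word \<Rightarrow> 'k::field) set) \<and> essential_right n (Fn n :: (word \<Rightarrow> 'k) set))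
    \<and> (soc_left n = (Fn n :: (word \<Rightarrow> 'k::field) set) \<and> soc_right n = (Fn n :: (word \<Rightarrow> 'k) set))
    \<and> (soc_bimod n = (Fn n :: (word \<Rightarrow> 'k::field) set) \<and> simple_bimod n (Fn n :: (word \<Rightarrow> 'k) set))
    \<and> (prime_alg n TYPE('k::field))
    \<and> (\<forall>I :: (word \<Rightarrow> 'k::field) set. ideal n I \<and> I \<noteq> {szero} \<longrightarrow> essential_left n I \<and> essential_right n I)"
  using Fn_faithful Fn_subset_ideal essential_ideal
  by (intro conjI ballI impI allI centre_eq_scalars ideal_Fn Fn_neq_szero setprod_Fn_Fn
      essential_left_Fn essential_right_Fn soc_left_Fn soc_right_Fn soc_bimod_Fn simple_bimod_Fn
      prime_alg) blast+

end
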